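(* Let $\alpha\in(0,1)$ and let $u_\alpha(k)$, $k\ge1$, be either the linear boundary $u_\alpha(k)=\sqrt{\frac{-\log\alpha}{2m}}\,k+\sqrt{\frac{-m\log\alpha}{2}}$ (fixed $m>0$) or the curved boundary $u_\alpha(k)=1.7\sqrt{k(\log\log(2k)+0.72\log\frac{5.2}{\alpha})}$. Suppose the $p$-values $(p_i)_{i\in\mathcal I}$ have nondecreasing densities on $[0,1]$ and are independent of each other and of the covariates $(x_i)_{i\in\mathcal I}$. Then the interactively ordered martingale test in which the masked $p$-value $g$ is replaced by $\widetilde g(p)=\min(p,(p+\tfrac12)\bmod 1)$ controls the type-I error at level $\alpha$, i.e. rejects with probability at most $\alpha$, for any analyst strategy. Here the test is as follows (with $\widetilde g$ in place of $g$). (Batch, $\mathcal I=\{1,\dots,n\}$.) $M_0=\emptyset$, $\mathcal F_0=\sigma((x_i,\widetilde g(p_i))_{i=1}^n)$; for $k=1,\dots,n$ choose $i^\star_k\notin M_{k-1}$ measurably w.r.t. $\mathcal F_{k-1}$, set $M_k=M_{k-1}\cup\{i^\star_k\}$, $\mathcal F_k=\sigma((x_i,\widetilde g(p_i))_{i=1}^n,(p_i)_{i\in M_k})$, and reject if $\sum_{i\in M_k}h(p_i)>u_\alpha(k)$. (Online, $\mathcal I=\mathbb N$.) For $t=1,2,\dots$, with $\mathcal F_{t-1}=\sigma((x_i,\widetilde g(p_i))_{i=1}^t,(p_i)_{i=1}^{t-1})$, decide measurably w.r.t. $\mathcal F_{t-1}$ whether to add $t$ to the current set $M$; reject if $|M|=k\ge1$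 and $\sum_{i\in M}h(p_i)>u_\alpha(k)$.
   Context: $h(p)=2\cdot\mathbf 1\{p<0.5\}-1\in\{-1,1\}$. The assumptions describe the global null hypothesis; the rejection probability under them is the type-I error. *)

theory Defs
  imports "HOL-Probability.Probability"
begin

definition h :: "real \<Rightarrow> real" where
  "h p = 2 * (if p < 1/2 then 1 else 0) - 1"

text \<open>Modified masking function: min(p, (p + 1/2) mod 1); for reals, x mod 1 = frac x.\<close>
definition gtilde :: "real \<Rightarrow> real" where
  "gtilde p = min p (frac (p + 1/2))"

definition u_lin :: "real \<Rightarrow> real \<Rightarrow> nat \<Rightarrow> real" where
  "u_lin m \<alpha> k = sqrt (- ln \<alpha> / (2 * m)) * real k + sqrt (- m * ln \<alpha> / 2)"

definition u_curved :: "real \<Rightarrow> nat \<Rightarrow> real" where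
  "u_curved \<alpha> k = 1.7 * sqrt (real k * (ln (ln (2 * real k)) + 0.72 * ln (5.2 / \<alpha>)))"

definition preimgs :: "'a set \<Rightarrow> ('a \<Rightarrow> 'b) \<Rightarrow> 'b measure \<Rightarrow> 'a set set" where
  "preimgs \<Omega> f N = {f -` A \<inter> \<Omega> | A. A \<in> sets N}"

definition pvalue_hyps ::
  "'a measure \<Rightarrow> 'x measure \<Rightarrow> nat set \<Rightarrow> (nat \<Rightarrow> 'a \<Rightarrow> 'x) \<Rightarrow> (nat \<Rightarrow> 'a \<Rightarrow> real) \<Rightarrow> bool" where
  "pvalue_hyps M X I x p \<longleftrightarrow>
     (\<forall>i\<in>I. x i \<in> measurable M X) \<and>
     (\<forall>i\<in>I. \<exists>f. distributed M lborel (p i) f \<and> (\<forall>t. t \<notin> {0..1} \<longrightarrow> f t = 0)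
                  \<and> mono_on {0..1} f) \<and>
     prob_space.indep_vars M (\<lambda>_. borel) p I \<and>
     prob_space.indep_set M
        (preimgs (space M) (\<lambda>\<omega>. restrict (\<lambda>i. p i \<omega>) I) (PiM I (\<lambda>_. borel)))
        (preimgs (space M) (\<lambda>\<omega>. restrict (\<lambda>i. x i \<omega>) I) (PiM I (\<lambda>_. X)))"

definition revealed :: "(nat \<Rightarrow> 'a \<Rightarrow> nat) \<Rightarrow> nat \<Rightarrow> 'a \<Rightarrow> nat set" where
  "revealed istar k \<omega> = (\<lambda>j. istar j \<omega>) ` {1..k}"

text \<open>F_k = sigma((x_i, gtilde(p_i))_{i=1..n}, (p_i)_{i \<in> M_k}); the randomly indexed
  family (p_i)_{i \<in> M_k} is encoded by the indicators 1{i \<in> M_k} together with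
  p_i * 1{i \<in> M_k}, i = 1..n.\<close>
definition F_batch ::
  "'a measure \<Rightarrow> 'x measure \<Rightarrow> nat \<Rightarrow> (nat \<Rightarrow> 'a \<Rightarrow> 'x) \<Rightarrow> (nat \<Rightarrow> 'a \<Rightarrow> real)
     \<Rightarrow> (nat \<Rightarrow> 'a \<Rightarrow> nat) \<Rightarrow> nat \<Rightarrow> 'a measure" where
  "F_batch M X n x p istar k = sigma (space M)
     (\<Union>i\<in>{1..n}. preimgs (space M) (x i) X
               \<union> preimgs (space M) (\<lambda>\<omega>. gtilde (p i \<omega>)) borel
               \<union> preimgs (space M) (\<lambda>\<omega>. i \<in> revealed istar k \<omega>) (count_space UNIV)
               \<union> preimgs (space M) (\<lambda>\<omega>. if i \<in> revealed istar k \<omega> then p i \<omega> else 0) borel)"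

definition batch_strategy ::
  "'a measure \<Rightarrow> 'x measure \<Rightarrow> nat \<Rightarrow> (nat \<Rightarrow> 'a \<Rightarrow> 'x) \<Rightarrow> (nat \<Rightarrow> 'a \<Rightarrow> real)
     \<Rightarrow> (nat \<Rightarrow> 'a \<Rightarrow> nat) \<Rightarrow> bool" where
  "batch_strategy M X n x p istar \<longleftrightarrow>
     (\<forall>k\<in>{1..n}. istar k \<in> measurable (F_batch M X n x p istar (k - 1)) (count_space UNIV)
        \<and> (\<forall>\<omega>\<in>space M. istar k \<omega> \<in> {1..n} - revealed istar (k - 1) \<omega>))"

definition batch_reject ::
  "(nat \<Rightarrow> real) \<Rightarrow> nat \<Rightarrow> (nat \<Rightarrow> 'a \<Rightarrow> real) \<Rightarrow> (nat \<Rightarrow> 'a \<Rightarrow> nat) \<Rightarrow> 'a \<Rightarrow> bool" where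
  "batch_reject u n p istar \<omega> \<longleftrightarrow>
     (\<exists>k\<in>{1..n}. (\<Sum>i\<in>revealed istar k \<omega>. h (p i \<omega>)) > u k)"

text \<open>F_{t-1} = sigma((x_i, gtilde(p_i))_{i=1..t}, (p_i)_{i=1..t-1})\<close>
definition F_online ::
  "'a measure \<Rightarrow> 'x measure \<Rightarrow> (nat \<Rightarrow> 'a \<Rightarrow> 'x) \<Rightarrow> (nat \<Rightarrow> 'a \<Rightarrow> real) \<Rightarrow> nat \<Rightarrow> 'a measure" where
  "F_online M X x p t = sigma (space M)
     ((\<Union>i\<in>{1..t}. preimgs (space M) (x i) X \<union> preimgs (space M) (\<lambda>\<omega>. gtilde (p i \<omega>)) borel)
      \<union> (\<Union>i\<in>{1..<t}. preimgs (space M) (p i) borel))"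

text \<open>d t \<omega> = True iff t is added to M at time t; decision is F_{t-1}-measurable.\<close>
definition online_strategy ::
  "'a measure \<Rightarrow> 'x measure \<Rightarrow> (nat \<Rightarrow> 'a \<Rightarrow> 'x) \<Rightarrow> (nat \<Rightarrow> 'a \<Rightarrow> real) \<Rightarrow> (nat \<Rightarrow> 'a \<Rightarrow> bool) \<Rightarrow> bool" where
  "online_strategy M X x p d \<longleftrightarrow>
     (\<forall>t\<ge>1. d t \<in> measurable (F_online M X x p t) (count_space UNIV))"

definition selected :: "(nat \<Rightarrow> 'a \<Rightarrow> bool) \<Rightarrow> nat \<Rightarrow> 'a \<Rightarrow> nat set" where
  "selected d t \<omega> = {i \<in> {1..t}. d i \<omega>}"

definition online_reject ::
  "(nat \<Rightarrow> real) \<Rightarrow> (nat \<Rightarrow> 'a \<Rightarrow> real) \<Rightarrow> (nat \<Rightarrow> 'a \<Rightarrow> bool) \<Rightarrow> 'a \<Rightarrow> bool" where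
  "online_reject u p d \<omega> \<longleftrightarrow>
     (\<exists>t\<ge>1. card (selected d t \<omega>) \<ge> 1 \<and>
        (\<Sum>i\<in>selected d t \<omega>. h (p i \<omega>)) > u (card (selected d t \<omega>)))"

end

theory Submission
  imports Defs
begin

text \<open>Let \<open>\<xi>\<^sub>k \<in> {-1, 0, 1}\<close> be \<open>h\<close> of the p-value revealed at step \<open>k\<close> (\<open>0\<close> if none is revealed),
  \<open>S\<^sub>k\<close> the sum and \<open>C\<^sub>k\<close> the number of nonzero increments. Before step \<open>k\<close> the analyst has seen
  the p-value about to be revealed only through \<open>gtilde\<close>, alongside the covariates and other p-values,
  which are independent of it. Since \<open>gtilde t = gtilde (t + 1/2)\<close> on \<open>[0, 1/2)\<close>, a nondecreasing density
  makes \<open>\<xi>\<^sub>k = -1\<close> conditionally at least as likely as \<open>\<xi>\<^sub>k = 1\<close>. Since \<open>cosh l \<le> exp (l\<^sup>2/2)\<close>,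
  \<open>exp (l S\<^sub>k - l\<^sup>2 C\<^sub>k / 2)\<close> is then a nonnegative supermartingale, and Ville's inequality bounds the
  probability that \<open>S\<^sub>k\<close> ever exceeds \<open>a C\<^sub>k + b\<close> by \<open>exp (-2 a b)\<close>. The linear boundary is such a
  line with \<open>exp (-2 a b) = \<alpha>\<close>. The curved boundary dominates, on each epoch
  \<open>6 * 2^j \<le> C\<^sub>k \<le> 12 * 2^j\<close>, a line with crossing probability \<open>\<alpha> * epoch_weight j\<close>, where the weights
  sum to at most 1, and it cannot be exceeded while \<open>C\<^sub>k \<le> 5\<close>.\<close>

section \<open>Numerical bounds on logarithms\<close>

lemma exp_ge_taylor_polynomial:
  fixes x :: real assumes "0 \<le> x"
  shows "(\<Sum>n<N. x^n / fact n) \<le> exp x"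
proof -
  have s: "(\<lambda>n. x^n /\<^sub>R fact n) sums exp x" by (rule exp_converges)
  have "(\<Sum>n<N. x^n /\<^sub>R fact n) \<le> (\<Sum>n. x^n /\<^sub>R fact n)"
    by (rule sum_le_suminf) (use s assms in \<open>auto simp: sums_iff\<close>)
  then show ?thesis using s by (simp add: sums_iff divide_inverse mult.commute)
qed

lemma exp_le_power_quadratic:
  fixes y :: real assumes "0 \<le> y" "y \<le> real n" "n > 0"
  shows "exp y \<le> (1 + y / n + (y/n)^2) ^ n"
proof -
  have "exp y = exp (y / n) ^ n" using assms by (simp add: exp_of_nat_mult[symmetric])
  also have "\<dots> \<le> (1 + y / n + (y/n)^2) ^ n"
    by (rule power_mono) (use assms in \<open>auto intro!: exp_bound\<close>)
  finally show ?thesis .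
qed

lemma ln_3_le: "ln (3::real) \<le> 11/10"
proof -
  have "(3::real) \<le> (\<Sum>n<7. (11/10)^n / fact n)" by (simp add: numeral_eq_Suc fact_numeral)
  also have "\<dots> \<le> exp (11/10)" by (rule exp_ge_taylor_polynomial) simp
  finally show ?thesis using ln_le_cancel_iff[of 3 "exp (11/10)"] by simp
qed

lemma ln_3_div_2_le: "ln (3/2::real) \<le> 41/100"
proof -
  have "(3/2::real) \<le> (\<Sum>n<5. (41/100)^n / fact n)" by (simp add: numeral_eq_Suc fact_numeral)
  also have "\<dots> \<le> exp (41/100)" by (rule exp_ge_taylor_polynomial) simp
  finally show ?thesis using ln_le_cancel_iff[of "3/2" "exp (41/100)"] by simp
qed

lemma ln_52_div_10_ge: "16/10 \<le> ln (52/10::real)"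
proof -
  have "exp (16/10::real) \<le> (1 + (16/10) / real 32 + ((16/10) / real 32)^2) ^ 32"
    by (rule exp_le_power_quadratic) auto
  also have "\<dots> \<le> 52/10" by (simp add: power_divide)
  finally show ?thesis by (subst ln_ge_iff) auto
qed

lemma ln_7_div_2_ge: "12/10 \<le> ln (7/2::real)"
proof -
  have "exp (12/10::real) \<le> (1 + (12/10) / real 16 + ((12/10) / real 16)^2) ^ 16"
    by (rule exp_le_power_quadratic) auto
  also have "\<dots> \<le> 7/2" by (simp add: power_divide)
  finally show ?thesis by (subst ln_ge_iff) auto
qed

lemma ln_12_ge: "7/3 \<le> ln (12::real)"
proof -
  have "ln (12::real) = ln 2 + ln 2 + ln 3"
    using ln_mult[of "2*2" 3] ln_mult[of 2 2] by simp
  moreover have "1 \<le> ln (3::real)" using exp_le by (simp add: ln_ge_iff)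
  ultimately show ?thesis using ln2_ge_two_thirds by linarith
qed

lemma ln_ln_2_ge: "- 41/100 \<le> ln (ln (2::real))"
proof -
  have "ln (2/3) \<le> ln (ln (2::real))" using ln2_ge_two_thirds by (subst ln_le_cancel_iff) auto
  moreover have "ln (2/3::real) = - ln (3/2)" using ln_div[of 2 3] ln_div[of 3 2] by simp
  ultimately show ?thesis using ln_3_div_2_le by linarith
qed

section \<open>The curved boundary lies above a family of lines\<close>

definition epoch_weight :: "nat \<Rightarrow> real" where
  "epoch_weight j = (real j + 5/2) powr (-1/3) - (real j + 7/2) powr (-1/3)"

definition epoch_start :: "nat \<Rightarrow> real" where
  "epoch_start j = 6 * 2 ^ j"

definition epoch_level :: "real \<Rightarrow> nat \<Rightarrow> real" where
  "epoch_level \<alpha> j = - ln (\<alpha> * epoch_weight j) / 2"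

definition epoch_slope :: "real \<Rightarrow> nat \<Rightarrow> real" where
  "epoch_slope \<alpha> j = sqrt (epoch_level \<alpha> j / (7/5 * epoch_start j))"

definition epoch_intercept :: "real \<Rightarrow> nat \<Rightarrow> real" where
  "epoch_intercept \<alpha> j = sqrt (epoch_level \<alpha> j * (7/5 * epoch_start j))"

lemma inverse_diff_ge_of_cube_diff:
  fixes y z :: real
  assumes "0 < z" "z < y" "y^3 - z^3 = 1"
  shows "1 / (3 * y^4) \<le> 1/z - 1/y"
proof -
  have "y^3 - z^3 = (y - z) * (y^2 + y*z + z^2)"
    by (simp add: power2_eq_square power3_eq_cube algebra_simps)
  moreover have "y*z \<le> y*y" "z*z \<le> y*y" using assms by (simp_all add: mult_mono)
  then have "y^2 + y*z + z^2 \<le> 3 * y^2" by (simp add: power2_eq_square)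
  then have "(y - z) * (y^2 + y*z + z^2) \<le> (y - z) * (3 * y^2)"
    using assms by (intro mult_left_mono) auto
  ultimately have "1 \<le> (y - z) * (3 * y^2)" using assms by simp
  then have "1 / (3 * y^4) \<le> (y - z) / (y * y)"
    using assms by (simp add: field_simps power2_eq_square power4_eq_xxxx)
  also have "\<dots> \<le> (y - z) / (y * z)"
    using assms by (intro divide_left_mono mult_left_mono) auto
  also have "\<dots> = 1/z - 1/y" using assms by (simp add: field_simps)
  finally show ?thesis .
qed

lemma epoch_weight_ge: "1 / (3 * ((real j + 7/2) powr (1/3))^4) \<le> epoch_weight j"
proof -
  define y where "y = (real j + 7/2) powr (1/3)"
  define z where "z = (real j + 5/2) powr (1/3)"
  have "y^3 = real j + 7/2" "z^3 = real j + 5/2"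
    unfolding y_def z_def by (simp_all add: powr_realpow[symmetric] powr_powr)
  moreover have "0 < z" "z < y" unfolding y_def z_def by (auto intro: powr_less_mono2)
  moreover have "epoch_weight j = 1/z - 1/y"
    unfolding epoch_weight_def y_def z_def by (simp add: powr_minus_divide)
  ultimately show ?thesis using inverse_diff_ge_of_cube_diff[of z y] unfolding y_def by simp
qed

lemma epoch_weight_pos: "0 < epoch_weight j"
proof -
  have "0 < 1 / (3 * ((real j + 7/2) powr (1/3))^4)" by simp
  then show ?thesis using epoch_weight_ge[of j] by linarith
qed

lemma epoch_weight_less_1: "epoch_weight j < 1"
proof -
  have "epoch_weight j < (real j + 5/2) powr (-1/3)" unfolding epoch_weight_def by simp
  also have "\<dots> \<le> (real j + 5/2) powr 0" by (rule powr_mono) auto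
  finally show ?thesis by simp
qed

lemma sum_epoch_weight_le_1: "(\<Sum>j<n. epoch_weight j) \<le> 1"
proof -
  have "(\<Sum>j<n. epoch_weight j) = (5/2) powr (-1/3) - (real n + 5/2) powr (-1/3)"
    unfolding epoch_weight_def
    using sum_lessThan_telescope'[of "\<lambda>j. (real j + 5/2) powr (-1/3)" n]
    by (simp add: algebra_simps)
  also have "\<dots> \<le> (5/2) powr (-1/3)" by simp
  also have "\<dots> \<le> (5/2) powr 0" by (rule powr_mono) auto
  finally show ?thesis by simp
qed

lemma minus_ln_epoch_weight_le: "- ln (epoch_weight j) \<le> ln 3 + 4/3 * ln (real j + 7/2)"
proof -
  define y where "y = (real j + 7/2) powr (1/3)"
  have "0 < y" unfolding y_def by simp
  then have "ln (1 / (3 * y^4)) \<le> ln (epoch_weight j)"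
    using epoch_weight_ge[of j] epoch_weight_pos[of j] unfolding y_def[symmetric]
    by (subst ln_le_cancel_iff) auto
  moreover have "ln (1 / (3 * y^4)) = - ln 3 - 4 * ln y"
    using \<open>0 < y\<close> by (simp add: ln_div ln_mult ln_realpow)
  moreover have "ln y = 1/3 * ln (real j + 7/2)" unfolding y_def by (simp add: ln_powr)
  ultimately show ?thesis by linarith
qed

lemma le_u_curved_of_sq_le:
  assumes "0 \<le> y" and "y^2 \<le> 289/100 * (real c * (ln (ln (2 * real c)) + 72/100 * ln (52/10 / \<alpha>)))"
  shows "y \<le> u_curved \<alpha> c"
proof -
  have "y = sqrt (y^2)" using assms(1) by simp
  also have "\<dots> \<le> sqrt (289/100) * sqrt (real c * (ln (ln (2 * real c)) + 72/100 * ln (52/10 / \<alpha>)))"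
    unfolding real_sqrt_mult[symmetric] using assms(2) by (rule real_sqrt_le_mono)
  also have "sqrt (289/100) = (17/10::real)" by (rule real_sqrt_unique) (simp_all add: power2_eq_square)
  finally show ?thesis unfolding u_curved_def by simp
qed

text \<open>With \<open>a = sqrt (L / (7/5 * K))\<close> and \<open>b = sqrt (L * (7/5 * K))\<close>, the difference
  \<open>(a * k + b)^2 - 413/100 * L * k\<close> is \<open>a^2 * (k^2 - 2982/1000 * K * k + 196/100 * K^2)\<close>,
  which is nonpositive on \<open>[K, 2 * K]\<close>.\<close>
lemma line_sq_le_on_doubling_interval:
  fixes K L k :: real
  assumes "0 < K" "0 \<le> L" "K \<le> k" "k \<le> 2 * K"
  shows "(sqrt (L / (7/5 * K)) * k + sqrt (L * (7/5 * K)))^2 \<le> 413/100 * L * k"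
proof -
  have "(k - K) * (k - 2 * K) \<le> 0" using assms by (intro mult_nonneg_nonpos) auto
  moreover have "(k - K) * (k - 2 * K) = k * k - 3 * (K * k) + 2 * (K * K)"
    by (simp add: algebra_simps)
  moreover have "(k - 2 * K) * K \<le> 0" using assms by (intro mult_nonpos_nonneg) auto
  moreover have "(k - 2 * K) * K = K * k - 2 * (K * K)" by (simp add: algebra_simps)
  moreover have "k^2 + (2 - 413/100) * (7/5) * K * k + (7/5)^2 * K^2
      = k * k - 2982/1000 * (K * k) + 196/100 * (K * K)"
    by (simp add: power2_eq_square algebra_simps)
  moreover have "0 \<le> K * K" by simp
  ultimately have "k^2 + (2 - 413/100) * (7/5) * K * k + (7/5)^2 * K^2 \<le> 0" by linarith
  then have "L / (7/5 * K) * (k^2 + (2 - 413/100) * (7/5) * K * k + (7/5)^2 * K^2) \<le> 0"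
    using assms by (intro mult_nonneg_nonpos) auto
  moreover
  have "(sqrt (L / (7/5 * K)))^2 = L / (7/5 * K)" "(sqrt (L * (7/5 * K)))^2 = L * (7/5 * K)"
    "sqrt (L / (7/5 * K)) * sqrt (L * (7/5 * K)) = L"
    using assms by (simp_all add: real_sqrt_mult[symmetric])
  then have "(sqrt (L / (7/5 * K)) * k + sqrt (L * (7/5 * K)))^2 - 413/100 * L * k
      = L / (7/5 * K) * (k^2 + (2 - 413/100) * (7/5) * K * k + (7/5)^2 * K^2)"
    using assms by (simp add: power2_sum power2_eq_square field_simps)
  ultimately show ?thesis by simp
qed

context
  fixes \<alpha> :: real assumes \<alpha>: "0 < \<alpha>" "\<alpha> < 1"
begin

lemma epoch_level_pos: "0 < epoch_level \<alpha> j"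
proof -
  have "\<alpha> * epoch_weight j < 1"
    using \<alpha> epoch_weight_pos[of j] epoch_weight_less_1[of j]
      mult_strict_mono[of \<alpha> 1 "epoch_weight j" 1] by simp
  then show ?thesis
    unfolding epoch_level_def using \<alpha> epoch_weight_pos[of j] by simp
qed

lemma epoch_slope_pos: "0 < epoch_slope \<alpha> j"
  unfolding epoch_slope_def epoch_start_def using epoch_level_pos by simp

lemma epoch_intercept_pos: "0 < epoch_intercept \<alpha> j"
  unfolding epoch_intercept_def epoch_start_def using epoch_level_pos by simp

lemma epoch_slope_mult_intercept: "epoch_slope \<alpha> j * epoch_intercept \<alpha> j = epoch_level \<alpha> j"
proof -
  have "0 < epoch_start j" unfolding epoch_start_def by simp
  then have "epoch_level \<alpha> j / (7/5 * epoch_start j) * (epoch_level \<alpha> j * (7/5 * epoch_start j))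
      = (epoch_level \<alpha> j)^2"
    by (simp add: field_simps power2_eq_square)
  then show ?thesis
    unfolding epoch_slope_def epoch_intercept_def real_sqrt_mult[symmetric]
    using epoch_level_pos[of j] by simp
qed

lemma exp_epoch_level: "exp (- 2 * epoch_level \<alpha> j) = \<alpha> * epoch_weight j"
  unfolding epoch_level_def using \<alpha> epoch_weight_pos[of j] by simp

lemma epoch_level_le:
  assumes c: "2 * epoch_start j \<le> c"
  shows "413/100 * epoch_level \<alpha> j \<le> 289/100 * (ln (ln c) + 72/100 * ln (52/10 / \<alpha>))"
proof -
  define L where "L = ln (real j + 7/2)"
  have "(2/3) * (real j + 7/2) \<le> ln 12 + real j * ln 2"
    using ln_12_ge mult_left_mono[OF ln2_ge_two_thirds, of "real j"] by simp
  also have "\<dots> = ln (2 * epoch_start j)"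
    unfolding epoch_start_def by (simp add: ln_mult ln_realpow)
  also have "\<dots> \<le> ln c"
  proof -
    have "0 < 2 * epoch_start j" unfolding epoch_start_def by simp
    then show ?thesis using c by (subst ln_le_cancel_iff) auto
  qed
  finally have "ln ((2/3) * (real j + 7/2)) \<le> ln (ln c)"
    by (subst ln_le_cancel_iff) auto
  moreover have "ln ((2/3) * (real j + 7/2)) = ln (2/3) + L"
    unfolding L_def by (subst ln_mult) auto
  moreover have "ln (2/3::real) = - ln (3/2)" using ln_div[of 2 3] ln_div[of 3 2] by simp
  ultimately have "- ln (3/2) + L \<le> ln (ln c)" by simp
  moreover have "ln (7/2) \<le> L" unfolding L_def by (subst ln_le_cancel_iff) auto
  moreover have "413/100 * epoch_level \<alpha> j = 2065/1000 * (- ln \<alpha>) + 2065/1000 * (- ln (epoch_weight j))"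
    unfolding epoch_level_def using \<alpha> epoch_weight_pos[of j] by (simp add: ln_mult)
  moreover have "ln (52/10 / \<alpha>) = ln (52/10) - ln \<alpha>" using ln_div[of "52/10" \<alpha>] \<alpha> by simp
  moreover have "ln \<alpha> < 0" using \<alpha> by simp
  ultimately show ?thesis
    using minus_ln_epoch_weight_le[of j] ln_3_le ln_3_div_2_le ln_52_div_10_ge ln_7_div_2_ge
    unfolding L_def[symmetric] ring_distribs by linarith
qed

lemma epoch_line_le_u_curved:
  assumes "epoch_start j \<le> real c" "real c \<le> 2 * epoch_start j"
  shows "epoch_slope \<alpha> j * real c + epoch_intercept \<alpha> j \<le> u_curved \<alpha> c"
proof (rule le_u_curved_of_sq_le)
  have "0 < epoch_start j" unfolding epoch_start_def by simp
  then have "(epoch_slope \<alpha> j * real c + epoch_intercept \<alpha> j)^2 \<le> 413/100 * epoch_level \<alpha> j * real c"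
    unfolding epoch_slope_def epoch_intercept_def using assms epoch_level_pos[of j]
    by (intro line_sq_le_on_doubling_interval) auto
  also have "\<dots> \<le> 289/100 * (ln (ln (2 * real c)) + 72/100 * ln (52/10 / \<alpha>)) * real c"
    using assms epoch_level_le[of j "2 * real c"] by (intro mult_right_mono) auto
  finally show "(epoch_slope \<alpha> j * real c + epoch_intercept \<alpha> j)^2
      \<le> 289/100 * (real c * (ln (ln (2 * real c)) + 72/100 * ln (52/10 / \<alpha>)))"
    by (simp add: ac_simps)
  show "0 \<le> epoch_slope \<alpha> j * real c + epoch_intercept \<alpha> j"
    using epoch_slope_pos[of j] epoch_intercept_pos[of j] by simp
qed

lemma le_u_curved_small:
  assumes "1 \<le> c" "c \<le> 5"
  shows "real c \<le> u_curved \<alpha> c"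
proof (rule le_u_curved_of_sq_le)
  have "ln (52/10 / \<alpha>) = ln (52/10) - ln \<alpha>" using ln_div[of "52/10" \<alpha>] \<alpha> by simp
  then have A: "72/100 * (16/10) \<le> 72/100 * ln (52/10 / \<alpha>)"
    using ln_52_div_10_ge ln_less_zero[OF \<alpha>] by linarith
  consider "c = 1" | "2 \<le> c" "c \<le> 3" | "4 \<le> c" "c \<le> 5" using assms by linarith
  then have "real c \<le> 289/100 * (ln (ln (2 * real c)) + 72/100 * ln (52/10 / \<alpha>))"
  proof cases
    case 1
    then show ?thesis using ln_ln_2_ge A by simp
  next
    case 2
    have "ln 4 \<le> ln (2 * real c)" using 2 by (subst ln_le_cancel_iff) auto
    moreover have "ln (4::real) = 2 * ln 2" using ln_realpow[of 2 2] by simp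
    ultimately have "1 \<le> ln (2 * real c)" using ln2_ge_two_thirds by linarith
    then have "0 \<le> ln (ln (2 * real c))" by simp
    moreover have "real c \<le> 3" using 2 by simp
    ultimately show ?thesis using A unfolding ring_distribs by linarith
  next
    case 3
    have "ln 8 \<le> ln (2 * real c)" using 3 by (subst ln_le_cancel_iff) auto
    moreover have "ln (8::real) = 3 * ln 2" using ln_realpow[of 2 3] by simp
    ultimately have "2 \<le> ln (2 * real c)" using ln2_ge_two_thirds by linarith
    then have "ln 2 \<le> ln (ln (2 * real c))" by (subst ln_le_cancel_iff) auto
    moreover have "real c \<le> 5" using 3 by simp
    ultimately show ?thesis using A ln2_ge_two_thirds unfolding ring_distribs by linarith
  qed
  then have "real c * real c \<le> real c * (289/100 * (ln (ln (2 * real c)) + 72/100 * ln (52/10 / \<alpha>)))"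
    by (intro mult_left_mono) auto
  then show "(real c)^2 \<le> 289/100 * (real c * (ln (ln (2 * real c)) + 72/100 * ln (52/10 / \<alpha>)))"
    by (metis power2_eq_square mult.left_commute)
qed simp

end

lemma epoch_containing:
  assumes "6 \<le> c"
  shows "\<exists>j<c. epoch_start j \<le> real c \<and> real c \<le> 2 * epoch_start j"
proof -
  have "1 \<le> c div 6" using assms by simp
  then obtain j where j: "2^j \<le> c div 6" "c div 6 < 2^(j+1)"
    using ex_power_ivl1[of 2 "c div 6"] by auto
  then have "6 * 2^j \<le> c" "c < 6 * 2^(j+1)" by linarith+
  then have "real (6 * 2^j) \<le> real c" "real c \<le> real (2 * (6 * 2^j))"
    by (simp_all only: of_nat_le_iff) simp
  moreover have "j < c" using j(1) less_exp[of j] by linarith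
  ultimately show ?thesis unfolding epoch_start_def by (intro exI[of _ j]) simp
qed

section \<open>A maximal inequality for increments in \<open>{-1, 0, 1}\<close>\<close>

lemma cosh_le_exp_half_square:
  fixes l :: real assumes "0 \<le> l"
  shows "cosh l \<le> exp (l^2 / 2)"
proof -
  have "- (2*l) * (1/2) + ln (1 + (1/2) * (exp (2*l) - 1)) \<le> (2*l)^2 / 8"
    by (rule Hoeffdings_lemma_aux) (use assms in auto)
  moreover have "1 + (1/2) * (exp (2*l) - 1) = exp l * cosh l"
    using exp_add[of l l] unfolding cosh_field_def by (simp add: field_simps exp_minus mult_2)
  moreover have "0 < cosh l" by (simp add: cosh_field_def add_pos_pos)
  ultimately have "ln (cosh l) \<le> l^2 / 2" by (simp add: ln_mult power2_eq_square)
  then show ?thesis using \<open>0 < cosh l\<close> by (metis exp_le_cancel_iff exp_ln)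
qed

lemma exp_add_exp_minus_le_2:
  fixes l :: real assumes "0 \<le> l"
  shows "exp (l - l^2 / 2) + exp (- l - l^2 / 2) \<le> 2"
proof -
  have "exp (l - l^2 / 2) = exp l * exp (- (l^2 / 2))" "exp (- l - l^2 / 2) = exp (- l) * exp (- (l^2 / 2))"
    unfolding mult_exp_exp by simp_all
  then have "exp (l - l^2 / 2) + exp (- l - l^2 / 2) = 2 * (cosh l * exp (- (l^2 / 2)))"
    unfolding cosh_field_def by (simp add: field_simps)
  also have "\<dots> \<le> 2 * (exp (l^2 / 2) * exp (- (l^2 / 2)))"
    using cosh_le_exp_half_square[OF assms] by (intro mult_left_mono mult_right_mono) auto
  also have "\<dots> = 2" by (simp add: exp_minus)
  finally show ?thesis .
qed

lemma ennreal_weighted_sum_le_sum: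
  fixes a1 a2 :: ennreal and A B :: real
  assumes "a1 \<le> a2" "0 \<le> B" "B \<le> A" "A + B \<le> 2"
  shows "a1 * ennreal A + a2 * ennreal B \<le> a1 + a2"
proof (cases "a2 = top")
  case False
  then obtain r1 r2 where r: "a1 = ennreal r1" "a2 = ennreal r2" "0 \<le> r1" "r1 \<le> r2"
    using assms(1) by (cases a1; cases a2) (auto simp: top_unique)
  have "r1 * A + r2 * B \<le> r1 * A + r2 * B + (A - B) * (r2 - r1) / 2"
    using assms r by simp
  also have "\<dots> = (A + B) / 2 * (r1 + r2)" by (simp add: field_simps)
  also have "\<dots> \<le> r1 + r2" using assms r mult_right_mono[of "(A + B) / 2" 1 "r1 + r2"] by simp
  finally show ?thesis
    using assms r by (simp add: ennreal_mult[symmetric] ennreal_plus[symmetric] del: ennreal_plus)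
qed simp

lemma nn_integral_indicator_mono_subalgebra:
  fixes W :: "'a \<Rightarrow> ennreal"
  assumes sub: "subalgebra M F" and E: "E1 \<in> sets M" "E2 \<in> sets M"
    and le: "\<And>A. A \<in> sets F \<Longrightarrow> emeasure M (A \<inter> E1) \<le> emeasure M (A \<inter> E2)"
    and W: "W \<in> borel_measurable F"
  shows "(\<integral>\<^sup>+\<omega>. W \<omega> * indicator E1 \<omega> \<partial>M) \<le> (\<integral>\<^sup>+\<omega>. W \<omega> * indicator E2 \<omega> \<partial>M)"
proof -
  define N where "N E = distr (density M (indicator E)) F (\<lambda>\<omega>. \<omega>)" for E
  have id: "(\<lambda>\<omega>. \<omega>) \<in> measurable (density M (indicator E)) F" for E
    using measurable_from_subalg[OF sub measurable_ident_sets[OF refl]] by simp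
  have WM: "W \<in> borel_measurable M" by (rule measurable_from_subalg[OF sub W])
  have integral: "(\<integral>\<^sup>+\<omega>. W \<omega> * indicator E \<omega> \<partial>M) = integral\<^sup>N (N E) W" if "E \<in> sets M" for E
    unfolding N_def using that WM
    by (simp add: nn_integral_distr[OF id] W nn_integral_density mult.commute)
  have emeasure_N: "emeasure (N E) A = emeasure M (A \<inter> E)" if "E \<in> sets M" "A \<in> sets F" for E A
  proof -
    have "A \<in> sets M" using sub that(2) unfolding subalgebra_def by auto
    then show ?thesis unfolding N_def using that
      by (simp add: emeasure_distr[OF id] emeasure_density indicator_inter_arith[symmetric]
          Int_absorb2 sets.sets_into_space mult.commute)
  qed
  have "emeasure (N E1) A \<le> emeasure (N E2) A" for A
  proof (cases "A \<in> sets F")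
    case True
    then show ?thesis using emeasure_N[OF E(1) True] emeasure_N[OF E(2) True] le[OF True] by simp
  qed (simp add: N_def emeasure_notin_sets)
  then have "N E1 \<le> N E2" unfolding le_measure_iff by (simp add: N_def le_fun_def)
  then have "integral\<^sup>N (N E1) W \<le> integral\<^sup>N (N E2) W"
    by (intro nn_integral_mono_measure) (simp add: N_def)
  then show ?thesis using integral E by simp
qed

locale signed_increments = prob_space M for M :: "'a measure" +
  fixes F :: "nat \<Rightarrow> 'a measure" and \<xi> :: "nat \<Rightarrow> 'a \<Rightarrow> real"
  assumes subalg: "\<And>k. subalgebra M (F k)"
    and adapted: "\<And>j k. 1 \<le> j \<Longrightarrow> j \<le> k \<Longrightarrow> \<xi> j \<in> borel_measurable (F k)"
    and increment_range: "\<And>j \<omega>. \<omega> \<in> space M \<Longrightarrow> \<xi> j \<omega> \<in> {-1, 0, 1}"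
    and up_le_down: "\<And>k A. 1 \<le> k \<Longrightarrow> A \<in> sets (F (k - 1)) \<Longrightarrow>
       emeasure M (A \<inter> {\<omega>\<in>space M. \<xi> k \<omega> = 1}) \<le> emeasure M (A \<inter> {\<omega>\<in>space M. \<xi> k \<omega> = -1})"
begin

definition S :: "nat \<Rightarrow> 'a \<Rightarrow> real" where
  "S k \<omega> = (\<Sum>j\<in>{1..k}. \<xi> j \<omega>)"

definition C :: "nat \<Rightarrow> 'a \<Rightarrow> real" where
  "C k \<omega> = (\<Sum>j\<in>{1..k}. \<bar>\<xi> j \<omega>\<bar>)"

definition N :: "nat \<Rightarrow> 'a \<Rightarrow> nat" where
  "N k \<omega> = card {j\<in>{1..k}. \<xi> j \<omega> \<noteq> 0}"

definition crosses :: "real \<Rightarrow> real \<Rightarrow> nat \<Rightarrow> 'a \<Rightarrow> bool" where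
  "crosses a b k \<omega> \<longleftrightarrow> (\<exists>j\<in>{1..k}. a * C j \<omega> + b < S j \<omega>)"

definition exceeds :: "(nat \<Rightarrow> real) \<Rightarrow> nat \<Rightarrow> 'a \<Rightarrow> bool" where
  "exceeds u k \<omega> \<longleftrightarrow> 1 \<le> N k \<omega> \<and> u (N k \<omega>) < S k \<omega>"

definition exp_factor :: "real \<Rightarrow> real \<Rightarrow> real" where
  "exp_factor l x = exp (l * x - l^2 / 2 * \<bar>x\<bar>)"

definition exp_process :: "real \<Rightarrow> nat \<Rightarrow> 'a \<Rightarrow> real" where
  "exp_process l k \<omega> = exp (l * S k \<omega> - l^2 / 2 * C k \<omega>)"

text \<open>The supermartingale \<open>exp_process (2 * a)\<close>, frozen once the line \<open>a * C + b\<close> has been crossed.\<close>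
primrec stopped_exp :: "real \<Rightarrow> real \<Rightarrow> nat \<Rightarrow> 'a \<Rightarrow> ennreal" where
  "stopped_exp a b 0 \<omega> = 1"
| "stopped_exp a b (Suc k) \<omega> = (if crosses a b k \<omega> then stopped_exp a b k \<omega>
     else stopped_exp a b k \<omega> * ennreal (exp_factor (2 * a) (\<xi> (Suc k) \<omega>)))"

lemma S_Suc: "S (Suc k) \<omega> = S k \<omega> + \<xi> (Suc k) \<omega>"
  unfolding S_def by (simp add: add.commute)

lemma C_Suc: "C (Suc k) \<omega> = C k \<omega> + \<bar>\<xi> (Suc k) \<omega>\<bar>"
  unfolding C_def by (simp add: add.commute)

lemma exp_process_Suc: "exp_process l (Suc k) \<omega> = exp_process l k \<omega> * exp_factor l (\<xi> (Suc k) \<omega>)"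
  unfolding exp_process_def exp_factor_def S_Suc C_Suc mult_exp_exp by (simp add: algebra_simps)

lemma crosses_Suc: "crosses a b (Suc k) \<omega> \<longleftrightarrow> crosses a b k \<omega> \<or> a * C (Suc k) \<omega> + b < S (Suc k) \<omega>"
proof -
  have "{1..Suc k} = insert (Suc k) {1..k}" by auto
  then show ?thesis unfolding crosses_def by auto
qed

lemma ennreal_exp_process_Suc:
  "ennreal (exp_process l (Suc k) \<omega>) = ennreal (exp_process l k \<omega>) * ennreal (exp_factor l (\<xi> (Suc k) \<omega>))"
  unfolding exp_process_Suc by (rule ennreal_mult) (simp_all add: exp_process_def exp_factor_def)

lemma stopped_exp_eq_exp_process:
  "\<not> crosses a b k \<omega> \<Longrightarrow> stopped_exp a b k \<omega> = ennreal (exp_process (2 * a) k \<omega>)"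
proof (induction k)
  case 0
  then show ?case by (simp add: exp_process_def S_def C_def)
next
  case (Suc k)
  then show ?case by (simp add: crosses_Suc ennreal_exp_process_Suc)
qed

lemma stopped_exp_Suc_eq_exp_process:
  "\<not> crosses a b k \<omega> \<Longrightarrow> stopped_exp a b (Suc k) \<omega> = ennreal (exp_process (2 * a) (Suc k) \<omega>)"
  by (simp add: stopped_exp_eq_exp_process ennreal_exp_process_Suc)

lemma exp_le_stopped_exp:
  assumes "0 < a" "crosses a b k \<omega>"
  shows "ennreal (exp (2 * a * b)) \<le> stopped_exp a b k \<omega>"
  using assms(2)
proof (induction k)
  case (Suc k)
  show ?case
  proof (cases "crosses a b k \<omega>")
    case False
    then have "a * C (Suc k) \<omega> + b < S (Suc k) \<omega>" using Suc.prems crosses_Suc by blast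
    then have "2 * a * b \<le> 2 * a * S (Suc k) \<omega> - (2 * a)^2 / 2 * C (Suc k) \<omega>"
      using assms(1) mult_left_mono[of "a * C (Suc k) \<omega> + b" "S (Suc k) \<omega>" "2 * a"]
      by (simp add: power2_eq_square algebra_simps)
    then show ?thesis
      unfolding stopped_exp_Suc_eq_exp_process[OF False] exp_process_def by (simp add: ennreal_leI)
  qed (use Suc in simp)
qed (simp add: crosses_def)

lemma S_measurable: "k \<le> m \<Longrightarrow> S k \<in> borel_measurable (F m)"
  unfolding S_def by (intro borel_measurable_sum) (auto intro: adapted)

lemma C_measurable: "k \<le> m \<Longrightarrow> C k \<in> borel_measurable (F m)"
  unfolding C_def by (intro borel_measurable_sum borel_measurable_abs) (auto intro: adapted)

lemma crosses_measurable:
  assumes "k \<le> m" shows "Measurable.pred (F m) (crosses a b k)"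
proof -
  have "{\<omega>\<in>space (F m). crosses a b k \<omega>} = (\<Union>j\<in>{1..k}. {\<omega>\<in>space (F m). a * C j \<omega> + b < S j \<omega>})"
    unfolding crosses_def by auto
  also have "\<dots> \<in> sets (F m)"
    using assms by (intro sets.finite_UN) (auto intro!: borel_measurable_less borel_measurable_add
        borel_measurable_times S_measurable C_measurable)
  finally show ?thesis unfolding pred_def .
qed

lemma stopped_exp_measurable: "k \<le> m \<Longrightarrow> stopped_exp a b k \<in> borel_measurable (F m)"
proof (induction k)
  case 0
  have "stopped_exp a b 0 = (\<lambda>_. 1)" by auto
  then show ?case by simp
next
  case (Suc k)
  have [measurable]: "Measurable.pred (F m) (crosses a b k)" "\<xi> (Suc k) \<in> borel_measurable (F m)"
    "stopped_exp a b k \<in> borel_measurable (F m)"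
    using Suc crosses_measurable adapted by auto
  show ?case unfolding stopped_exp.simps exp_factor_def by measurable
qed

lemma measurable_M: "f \<in> measurable (F k) Y \<Longrightarrow> f \<in> measurable M Y"
  by (rule measurable_from_subalg[OF subalg])

lemma nn_integral_mult_increment:
  fixes W :: "'a \<Rightarrow> ennreal" and f :: "real \<Rightarrow> ennreal"
  assumes [measurable]: "W \<in> borel_measurable M" "\<xi> j \<in> borel_measurable M"
  shows "(\<integral>\<^sup>+\<omega>. W \<omega> * f (\<xi> j \<omega>) \<partial>M)
    = (\<integral>\<^sup>+\<omega>. W \<omega> * indicator {\<omega>\<in>space M. \<xi> j \<omega> = -1} \<omega> \<partial>M) * f (-1)
      + (\<integral>\<^sup>+\<omega>. W \<omega> * indicator {\<omega>\<in>space M. \<xi> j \<omega> = 0} \<omega> \<partial>M) * f 0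
      + (\<integral>\<^sup>+\<omega>. W \<omega> * indicator {\<omega>\<in>space M. \<xi> j \<omega> = 1} \<omega> \<partial>M) * f 1"
proof -
  have "(\<integral>\<^sup>+\<omega>. W \<omega> * f (\<xi> j \<omega>) \<partial>M)
      = (\<integral>\<^sup>+\<omega>. W \<omega> * indicator {\<omega>\<in>space M. \<xi> j \<omega> = -1} \<omega> * f (-1)
          + W \<omega> * indicator {\<omega>\<in>space M. \<xi> j \<omega> = 0} \<omega> * f 0
          + W \<omega> * indicator {\<omega>\<in>space M. \<xi> j \<omega> = 1} \<omega> * f 1 \<partial>M)"
  proof (intro nn_integral_cong)
    fix \<omega> assume "\<omega> \<in> space M"
    then show "W \<omega> * f (\<xi> j \<omega>) = W \<omega> * indicator {\<omega>\<in>space M. \<xi> j \<omega> = -1} \<omega> * f (-1)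
        + W \<omega> * indicator {\<omega>\<in>space M. \<xi> j \<omega> = 0} \<omega> * f 0
        + W \<omega> * indicator {\<omega>\<in>space M. \<xi> j \<omega> = 1} \<omega> * f 1"
      using increment_range[of \<omega> j] by auto
  qed
  also have "\<dots> = (\<integral>\<^sup>+\<omega>. W \<omega> * indicator {\<omega>\<in>space M. \<xi> j \<omega> = -1} \<omega> \<partial>M) * f (-1)
      + (\<integral>\<^sup>+\<omega>. W \<omega> * indicator {\<omega>\<in>space M. \<xi> j \<omega> = 0} \<omega> \<partial>M) * f 0
      + (\<integral>\<^sup>+\<omega>. W \<omega> * indicator {\<omega>\<in>space M. \<xi> j \<omega> = 1} \<omega> \<partial>M) * f 1"
    by (simp add: nn_integral_add nn_integral_multc)
  finally show ?thesis .
qed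

lemma nn_integral_mult_exp_factor_le:
  fixes W :: "'a \<Rightarrow> ennreal"
  assumes l: "0 \<le> l" and W: "W \<in> borel_measurable (F k)"
  shows "(\<integral>\<^sup>+\<omega>. W \<omega> * ennreal (exp_factor l (\<xi> (Suc k) \<omega>)) \<partial>M) \<le> (\<integral>\<^sup>+\<omega>. W \<omega> \<partial>M)"
proof -
  define I where "I c = (\<integral>\<^sup>+\<omega>. W \<omega> * indicator {\<omega>\<in>space M. \<xi> (Suc k) \<omega> = c} \<omega> \<partial>M)" for c
  have WM: "W \<in> borel_measurable M" "\<xi> (Suc k) \<in> borel_measurable M"
    using measurable_M[OF W] measurable_M[OF adapted[of "Suc k" "Suc k"]] by auto
  have "I 1 \<le> I (-1)" unfolding I_def
    by (rule nn_integral_indicator_mono_subalgebra[OF subalg _ _ _ W])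
      (use up_le_down[of "Suc k"] WM in auto)
  moreover have "exp (l - l^2 / 2) + exp (- l - l^2 / 2) \<le> 2" by (rule exp_add_exp_minus_le_2[OF l])
  moreover have "exp (- l - l^2 / 2) \<le> exp (l - l^2 / 2)" using l by simp
  ultimately have "I 1 * ennreal (exp (l - l^2 / 2)) + I (-1) * ennreal (exp (- l - l^2 / 2)) \<le> I 1 + I (-1)"
    using ennreal_weighted_sum_le_sum by simp
  then have "I 0 + (I 1 * ennreal (exp (l - l^2 / 2)) + I (-1) * ennreal (exp (- l - l^2 / 2)))
      \<le> I 0 + (I 1 + I (-1))"
    by (rule add_left_mono)
  then show ?thesis
    using nn_integral_mult_increment[OF WM, of "\<lambda>x. ennreal (exp_factor l x)"]
      nn_integral_mult_increment[OF WM, of "\<lambda>_. 1"]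
    unfolding I_def by (simp add: exp_factor_def ac_simps)
qed

lemma stopped_exp_integral_Suc_le:
  assumes "0 < a"
  shows "(\<integral>\<^sup>+\<omega>. stopped_exp a b (Suc k) \<omega> \<partial>M) \<le> (\<integral>\<^sup>+\<omega>. stopped_exp a b k \<omega> \<partial>M)"
proof -
  define V where "V \<omega> = (if crosses a b k \<omega> then stopped_exp a b k \<omega> else 0)" for \<omega>
  define W where "W \<omega> = (if crosses a b k \<omega> then 0 else stopped_exp a b k \<omega>)" for \<omega>
  have [measurable]: "Measurable.pred (F k) (crosses a b k)" "stopped_exp a b k \<in> borel_measurable (F k)"
    using crosses_measurable stopped_exp_measurable by auto
  have W: "W \<in> borel_measurable (F k)" "V \<in> borel_measurable (F k)"
    unfolding V_def W_def by measurable
  have [measurable]: "W \<in> borel_measurable M" "V \<in> borel_measurable M"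
    "(\<lambda>\<omega>. ennreal (exp_factor (2 * a) (\<xi> (Suc k) \<omega>))) \<in> borel_measurable M"
    using W measurable_M[OF adapted[of "Suc k" "Suc k"]] unfolding exp_factor_def
    by (auto intro: measurable_M)
  have "(\<integral>\<^sup>+\<omega>. stopped_exp a b (Suc k) \<omega> \<partial>M)
      = (\<integral>\<^sup>+\<omega>. V \<omega> + W \<omega> * ennreal (exp_factor (2 * a) (\<xi> (Suc k) \<omega>)) \<partial>M)"
    by (intro nn_integral_cong) (simp add: V_def W_def)
  also have "\<dots> = (\<integral>\<^sup>+\<omega>. V \<omega> \<partial>M) + (\<integral>\<^sup>+\<omega>. W \<omega> * ennreal (exp_factor (2 * a) (\<xi> (Suc k) \<omega>)) \<partial>M)"
    by (rule nn_integral_add) measurable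
  also have "\<dots> \<le> (\<integral>\<^sup>+\<omega>. V \<omega> \<partial>M) + (\<integral>\<^sup>+\<omega>. W \<omega> \<partial>M)"
    using nn_integral_mult_exp_factor_le[OF _ W(1), of "2 * a"] assms by (simp add: add_left_mono)
  also have "\<dots> = (\<integral>\<^sup>+\<omega>. V \<omega> + W \<omega> \<partial>M)"
    by (rule nn_integral_add[symmetric]) measurable
  also have "\<dots> = (\<integral>\<^sup>+\<omega>. stopped_exp a b k \<omega> \<partial>M)"
    by (intro nn_integral_cong) (simp add: V_def W_def)
  finally show ?thesis .
qed

lemma stopped_exp_integral_le_1: "0 < a \<Longrightarrow> (\<integral>\<^sup>+\<omega>. stopped_exp a b k \<omega> \<partial>M) \<le> 1"
proof (induction k)
  case 0
  then show ?case by (simp add: emeasure_space_1)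
next
  case (Suc k)
  then show ?case using stopped_exp_integral_Suc_le[of a b k] by simp
qed

lemma crosses_sets: "{\<omega>\<in>space M. crosses a b n \<omega>} \<in> sets M"
  using measurable_M[OF crosses_measurable[OF order_refl]] unfolding pred_def .

lemma prob_crosses_le:
  assumes "0 < a"
  shows "prob {\<omega>\<in>space M. crosses a b n \<omega>} \<le> exp (- 2 * a * b)"
proof -
  define E where "E = {\<omega>\<in>space M. crosses a b n \<omega>}"
  have "ennreal (exp (2 * a * b)) * emeasure M E = (\<integral>\<^sup>+\<omega>. ennreal (exp (2 * a * b)) * indicator E \<omega> \<partial>M)"
    using crosses_sets unfolding E_def by (simp add: nn_integral_cmult_indicator)
  also have "\<dots> \<le> (\<integral>\<^sup>+\<omega>. stopped_exp a b n \<omega> \<partial>M)"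
    by (intro nn_integral_mono) (auto simp: E_def indicator_def intro: exp_le_stopped_exp[OF assms])
  also have "\<dots> \<le> 1" by (rule stopped_exp_integral_le_1[OF assms])
  finally have "exp (2 * a * b) * prob E \<le> 1"
    by (simp add: emeasure_eq_measure ennreal_mult'[symmetric])
  then show ?thesis unfolding E_def by (simp add: exp_minus field_simps)
qed

lemma C_eq_N: "\<omega> \<in> space M \<Longrightarrow> C k \<omega> = real (N k \<omega>)"
proof -
  assume "\<omega> \<in> space M"
  then have "\<bar>\<xi> j \<omega>\<bar> = (if \<xi> j \<omega> \<noteq> 0 then 1 else 0)" for j
    using increment_range[of \<omega> j] by auto
  then have "C k \<omega> = (\<Sum>j\<in>{1..k}. if \<xi> j \<omega> \<noteq> 0 then 1 else 0)"
    unfolding C_def by simp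
  also have "\<dots> = real (N k \<omega>)" unfolding N_def by (simp add: sum.If_cases Int_def)
  finally show ?thesis .
qed

lemma S_le_C: "\<omega> \<in> space M \<Longrightarrow> S k \<omega> \<le> C k \<omega>"
  unfolding S_def C_def by (intro sum_mono) auto

lemma N_le: "N k \<omega> \<le> k"
proof -
  have "N k \<omega> \<le> card {1..k}" unfolding N_def by (intro card_mono) auto
  then show ?thesis by simp
qed

lemma exceeds_sets: "{\<omega>\<in>space M. \<exists>k\<in>{1..n}. exceeds u k \<omega>} \<in> sets M"
proof -
  have [measurable]: "S k \<in> borel_measurable M" "C k \<in> borel_measurable M" for k
    using S_measurable C_measurable measurable_M by blast+
  have "{\<omega>\<in>space M. \<exists>k\<in>{1..n}. exceeds u k \<omega>}
      = (\<Union>k\<in>{1..n}. \<Union>c\<in>{1..k}. {\<omega>\<in>space M. C k \<omega> = real c \<and> u c < S k \<omega>})"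
    unfolding exceeds_def using C_eq_N N_le by (auto 0 4 intro!: bexI)
  also have "\<dots> \<in> sets M" by measurable
  finally show ?thesis .
qed

context
  fixes \<alpha> :: real assumes \<alpha>: "0 < \<alpha>" "\<alpha> < 1"
begin

lemma prob_exceeds_u_lin_le:
  assumes "0 < m"
  shows "prob {\<omega>\<in>space M. \<exists>k\<in>{1..n}. exceeds (u_lin m \<alpha>) k \<omega>} \<le> \<alpha>"
proof -
  define a where "a = sqrt (- ln \<alpha> / (2 * m))"
  define b where "b = sqrt (- m * ln \<alpha> / 2)"
  have "0 < - ln \<alpha>" using \<alpha> by simp
  then have "0 < a" unfolding a_def using assms by (simp add: divide_neg_pos)
  have "2 * (a * b) = - ln \<alpha>"
  proof -
    have "(- ln \<alpha> / (2 * m)) * (- m * ln \<alpha> / 2) = (- ln \<alpha> / 2)^2"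
      using assms by (simp add: field_simps power2_eq_square)
    then show ?thesis unfolding a_def b_def real_sqrt_mult[symmetric] using \<open>0 < - ln \<alpha>\<close> by simp
  qed
  have "{\<omega>\<in>space M. \<exists>k\<in>{1..n}. exceeds (u_lin m \<alpha>) k \<omega>} \<subseteq> {\<omega>\<in>space M. crosses a b n \<omega>}"
    using C_eq_N unfolding exceeds_def crosses_def u_lin_def a_def[symmetric] b_def[symmetric]
    by fastforce
  then have "prob {\<omega>\<in>space M. \<exists>k\<in>{1..n}. exceeds (u_lin m \<alpha>) k \<omega>} \<le> prob {\<omega>\<in>space M. crosses a b n \<omega>}"
    by (intro finite_measure_mono crosses_sets)
  also have "\<dots> \<le> exp (- 2 * a * b)" by (rule prob_crosses_le[OF \<open>0 < a\<close>])
  also have "\<dots> = \<alpha>" using \<open>2 * (a * b) = - ln \<alpha>\<close> \<alpha> by (simp add: mult.assoc)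
  finally show ?thesis .
qed

lemma prob_exceeds_u_curved_le:
  "prob {\<omega>\<in>space M. \<exists>k\<in>{1..n}. exceeds (u_curved \<alpha>) k \<omega>} \<le> \<alpha>"
proof -
  define E where "E j = {\<omega>\<in>space M. crosses (epoch_slope \<alpha> j) (epoch_intercept \<alpha> j) n \<omega>}" for j
  have "{\<omega>\<in>space M. \<exists>k\<in>{1..n}. exceeds (u_curved \<alpha>) k \<omega>} \<subseteq> (\<Union>j<n. E j)"
  proof safe
    fix \<omega> k assume \<omega>: "\<omega> \<in> space M" and k: "k \<in> {1..n}" and ex: "exceeds (u_curved \<alpha>) k \<omega>"
    define c where "c = N k \<omega>"
    have c: "1 \<le> c" "u_curved \<alpha> c < S k \<omega>" "S k \<omega> \<le> real c" "c \<le> n"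
      using ex S_le_C[OF \<omega>, of k] C_eq_N[OF \<omega>, of k] N_le[of k \<omega>] k
      unfolding exceeds_def c_def by auto
    then have "\<not> c \<le> 5" using le_u_curved_small[OF \<alpha>, of c] by fastforce
    then obtain j where j: "j < c" "epoch_start j \<le> real c" "real c \<le> 2 * epoch_start j"
      using epoch_containing[of c] by auto
    have "epoch_slope \<alpha> j * C k \<omega> + epoch_intercept \<alpha> j < S k \<omega>"
      using epoch_line_le_u_curved[OF \<alpha> j(2,3)] c(2) C_eq_N[OF \<omega>, of k] unfolding c_def by simp
    then have "\<omega> \<in> E j" unfolding E_def crosses_def using \<omega> k by auto
    then show "\<omega> \<in> (\<Union>j<n. E j)" using j(1) c(4) by auto
  qed
  then have "prob {\<omega>\<in>space M. \<exists>k\<in>{1..n}. exceeds (u_curved \<alpha>) k \<omega>} \<le> prob (\<Union>j<n. E j)"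
    by (intro finite_measure_mono) (auto simp: E_def intro!: sets.finite_UN crosses_sets)
  also have "\<dots> \<le> (\<Sum>j<n. prob (E j))"
    by (intro finite_measure_subadditive_finite) (auto simp: E_def intro: crosses_sets)
  also have "\<dots> \<le> (\<Sum>j<n. \<alpha> * epoch_weight j)"
  proof (intro sum_mono)
    fix j
    have "prob (E j) \<le> exp (- 2 * epoch_slope \<alpha> j * epoch_intercept \<alpha> j)"
      unfolding E_def by (rule prob_crosses_le[OF epoch_slope_pos[OF \<alpha>]])
    then show "prob (E j) \<le> \<alpha> * epoch_weight j"
      using exp_epoch_level[OF \<alpha>, of j] epoch_slope_mult_intercept[OF \<alpha>, of j] by (simp add: mult.assoc)
  qed
  also have "\<dots> \<le> \<alpha>"
    using sum_epoch_weight_le_1[of n] \<alpha> mult_left_mono[of _ 1 \<alpha>] by (simp add: sum_distrib_left[symmetric])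
  finally show ?thesis .
qed

lemma prob_exceeds_le:
  assumes "(\<exists>m>0. u = u_lin m \<alpha>) \<or> u = u_curved \<alpha>"
  shows "prob {\<omega>\<in>space M. \<exists>k\<in>{1..n}. exceeds u k \<omega>} \<le> \<alpha>"
  using assms prob_exceeds_u_lin_le prob_exceeds_u_curved_le by auto

lemma prob_exceeds_ever_le:
  assumes "(\<exists>m>0. u = u_lin m \<alpha>) \<or> u = u_curved \<alpha>"
  shows "prob {\<omega>\<in>space M. \<exists>k\<ge>1. exceeds u k \<omega>} \<le> \<alpha>"
proof -
  define A where "A n = {\<omega>\<in>space M. \<exists>k\<in>{1..n}. exceeds u k \<omega>}" for n
  have "incseq A" unfolding A_def incseq_def by fastforce
  moreover have "range A \<subseteq> sets M" unfolding A_def using exceeds_sets by auto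
  moreover have "(\<Union>n. A n) = {\<omega>\<in>space M. \<exists>k\<ge>1. exceeds u k \<omega>}"
    unfolding A_def by (auto, metis atLeastAtMost_iff order_refl)
  moreover have "prob (A n) \<le> \<alpha>" for n unfolding A_def by (rule prob_exceeds_le[OF assms])
  ultimately show ?thesis
    using LIMSEQ_le_const2[OF finite_Lim_measure_incseq] by metis
qed

end

end

section \<open>Independence of one p-value from the others and the covariates\<close>

lemma Int_stable_preimgs: "Int_stable (preimgs \<Omega> f N)"
proof (rule Int_stableI)
  fix a b assume "a \<in> preimgs \<Omega> f N" "b \<in> preimgs \<Omega> f N"
  then obtain A B where "a = f -` A \<inter> \<Omega>" "b = f -` B \<inter> \<Omega>" "A \<in> sets N" "B \<in> sets N"
    unfolding preimgs_def by blast
  then show "a \<inter> b \<in> preimgs \<Omega> f N" unfolding preimgs_def by (intro CollectI exI[of _ "A \<inter> B"]) auto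
qed

lemma Int_stable_preimgs_rectangles:
  "Int_stable {f -` (A \<times> B) \<inter> \<Omega> | A B. A \<in> sets N1 \<and> B \<in> sets N2}"
proof (rule Int_stableI)
  fix a b assume "a \<in> {f -` (A \<times> B) \<inter> \<Omega> | A B. A \<in> sets N1 \<and> B \<in> sets N2}"
    "b \<in> {f -` (A \<times> B) \<inter> \<Omega> | A B. A \<in> sets N1 \<and> B \<in> sets N2}"
  then obtain A B A' B' where "a = f -` (A \<times> B) \<inter> \<Omega>" "b = f -` (A' \<times> B') \<inter> \<Omega>"
    "A \<in> sets N1" "B \<in> sets N2" "A' \<in> sets N1" "B' \<in> sets N2" by blast
  then show "a \<inter> b \<in> {f -` (A \<times> B) \<inter> \<Omega> | A B. A \<in> sets N1 \<and> B \<in> sets N2}"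
    by (intro CollectI exI[of _ "A \<inter> A'"] exI[of _ "B \<inter> B'"]) auto
qed

lemma preimgs_pair_measure:
  assumes "f \<in> \<Omega> \<rightarrow> space N1 \<times> space N2"
  shows "preimgs \<Omega> f (N1 \<Otimes>\<^sub>M N2) = sigma_sets \<Omega> {f -` (A \<times> B) \<inter> \<Omega> | A B. A \<in> sets N1 \<and> B \<in> sets N2}"
proof -
  have "{f -` (A \<times> B) \<inter> \<Omega> | A B. A \<in> sets N1 \<and> B \<in> sets N2}
      = {f -` S \<inter> \<Omega> | S. S \<in> {A \<times> B | A B. A \<in> sets N1 \<and> B \<in> sets N2}}"
    by blast
  then show ?thesis
    unfolding preimgs_def sets_pair_measure using sigma_sets_vimage_commute[OF assms] by simp
qed

lemma preimgs_comp_subset: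
  assumes "g \<in> measurable N' N" "X \<in> \<Omega> \<rightarrow> space N'"
  shows "preimgs \<Omega> (\<lambda>\<omega>. g (X \<omega>)) N \<subseteq> preimgs \<Omega> X N'"
proof
  fix S assume "S \<in> preimgs \<Omega> (\<lambda>\<omega>. g (X \<omega>)) N"
  then obtain A where A: "A \<in> sets N" "S = (\<lambda>\<omega>. g (X \<omega>)) -` A \<inter> \<Omega>" unfolding preimgs_def by auto
  then have "S = X -` (g -` A \<inter> space N') \<inter> \<Omega>" using assms(2) by auto
  moreover have "g -` A \<inter> space N' \<in> sets N'" using measurable_sets[OF assms(1) A(1)] .
  ultimately show "S \<in> preimgs \<Omega> X N'" unfolding preimgs_def by blast
qed

context prob_space
begin

lemma indep_set_commute: "indep_set A B \<Longrightarrow> indep_set B A"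
  unfolding indep_sets2_eq by (metis Int_commute mult.commute)

lemma indep_set_mono: "indep_set A B \<Longrightarrow> A' \<subseteq> A \<Longrightarrow> B' \<subseteq> B \<Longrightarrow> indep_set A' B'"
  unfolding indep_sets2_eq by blast

lemma indep_set_preimgs_of_indep_var:
  "indep_var N1 X N2 Y \<Longrightarrow> indep_set (preimgs (space M) X N1) (preimgs (space M) Y N2)"
  unfolding indep_var_eq preimgs_def by (auto elim!: indep_set_mono)

lemma prob_regroup_rectangle:
  assumes [measurable]: "A \<in> measurable M MA" "B \<in> measurable M MB" "C \<in> measurable M MC"
    and AB: "indep_set (preimgs (space M) A MA) (preimgs (space M) B MB)"
    and CAB: "indep_set (preimgs (space M) C MC) (preimgs (space M) (\<lambda>\<omega>. (A \<omega>, B \<omega>)) (MA \<Otimes>\<^sub>M MB))"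
    and sets: "D \<in> sets MC" "E \<in> sets MB" "F \<in> sets MA"
  shows "prob ((\<lambda>\<omega>. (C \<omega>, B \<omega>)) -` (D \<times> E) \<inter> space M \<inter> (A -` F \<inter> space M))
    = prob ((\<lambda>\<omega>. (C \<omega>, B \<omega>)) -` (D \<times> E) \<inter> space M) * prob (A -` F \<inter> space M)"
proof -
  let ?CB = "\<lambda>\<omega>. (C \<omega>, B \<omega>)" and ?AB = "\<lambda>\<omega>. (A \<omega>, B \<omega>)"
  have prob_C_AB: "prob (?CB -` (D \<times> E) \<inter> space M \<inter> (A -` F' \<inter> space M))
      = prob (C -` D \<inter> space M) * prob (?AB -` (F' \<times> E) \<inter> space M)" if "F' \<in> sets MA" for F'
  proof -
    have "?CB -` (D \<times> E) \<inter> space M \<inter> (A -` F' \<inter> space M) = C -` D \<inter> space M \<inter> (?AB -` (F' \<times> E) \<inter> space M)"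
      by auto
    then show ?thesis using that sets
      by (simp add: indep_setD[OF CAB] preimgs_def exI[of _ D] exI[of _ "F' \<times> E"])
  qed
  have "?AB -` (F \<times> E) \<inter> space M = A -` F \<inter> space M \<inter> (B -` E \<inter> space M)" by auto
  then have "prob (?AB -` (F \<times> E) \<inter> space M) = prob (A -` F \<inter> space M) * prob (B -` E \<inter> space M)"
    using sets by (simp add: indep_setD[OF AB] preimgs_def exI[of _ F] exI[of _ E])
  moreover have "?AB -` (space MA \<times> E) \<inter> space M = B -` E \<inter> space M"
    "?CB -` (D \<times> E) \<inter> space M \<inter> (A -` space MA \<inter> space M) = ?CB -` (D \<times> E) \<inter> space M"
    using measurable_space[OF assms(1)] by auto
  then have "prob (?CB -` (D \<times> E) \<inter> space M) = prob (C -` D \<inter> space M) * prob (B -` E \<inter> space M)"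
    using prob_C_AB[OF sets.top] by simp
  ultimately show ?thesis using prob_C_AB[OF sets(3)] by (simp add: ac_simps)
qed

lemma indep_set_preimgs_regroup:
  assumes [measurable]: "A \<in> measurable M MA" "B \<in> measurable M MB" "C \<in> measurable M MC"
    and AB: "indep_set (preimgs (space M) A MA) (preimgs (space M) B MB)"
    and CAB: "indep_set (preimgs (space M) C MC) (preimgs (space M) (\<lambda>\<omega>. (A \<omega>, B \<omega>)) (MA \<Otimes>\<^sub>M MB))"
  shows "indep_set (preimgs (space M) (\<lambda>\<omega>. (C \<omega>, B \<omega>)) (MC \<Otimes>\<^sub>M MB)) (preimgs (space M) A MA)"
proof -
  let ?CB = "\<lambda>\<omega>. (C \<omega>, B \<omega>)"
  define G where "G = {?CB -` (D \<times> E) \<inter> space M | D E. D \<in> sets MC \<and> E \<in> sets MB}"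
  have "indep_set G (preimgs (space M) A MA)"
    unfolding indep_sets2_eq
  proof (intro conjI ballI)
    fix a b assume "a \<in> G" "b \<in> preimgs (space M) A MA"
    then show "prob (a \<inter> b) = prob a * prob b"
      unfolding G_def preimgs_def using prob_regroup_rectangle[OF assms] by blast
  next
    have "?CB \<in> measurable M (MC \<Otimes>\<^sub>M MB)" by measurable
    then show "G \<subseteq> events" unfolding G_def by (blast intro: measurable_sets)
    show "preimgs (space M) A MA \<subseteq> events" unfolding preimgs_def by auto
  qed
  moreover have "Int_stable G" unfolding G_def by (rule Int_stable_preimgs_rectangles)
  ultimately have indep: "indep_set (sigma_sets (space M) G) (sigma_sets (space M) (preimgs (space M) A MA))"
    using Int_stable_preimgs by (rule indep_set_sigma_sets)
  have "preimgs (space M) ?CB (MC \<Otimes>\<^sub>M MB) = sigma_sets (space M) G"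
    unfolding G_def using measurable_space[OF assms(2)] measurable_space[OF assms(3)]
    by (intro preimgs_pair_measure) auto
  then show ?thesis by (intro indep_set_mono[OF indep]) auto
qed

lemma distr_pair_eq_pair_distr:
  assumes X: "X \<in> measurable M N1" and Y: "Y \<in> measurable M N2"
    and indep: "indep_set (preimgs (space M) X N1) (preimgs (space M) Y N2)"
  shows "distr M (N1 \<Otimes>\<^sub>M N2) (\<lambda>\<omega>. (X \<omega>, Y \<omega>)) = distr M N1 X \<Otimes>\<^sub>M distr M N2 Y"
proof (rule pair_measure_eqI[symmetric])
  interpret D1: prob_space "distr M N1 X" by (rule prob_space_distr[OF X])
  interpret D2: prob_space "distr M N2 Y" by (rule prob_space_distr[OF Y])
  show "sigma_finite_measure (distr M N1 X)" "sigma_finite_measure (distr M N2 Y)" ..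
  show "sets (distr M N1 X \<Otimes>\<^sub>M distr M N2 Y) = sets (distr M (N1 \<Otimes>\<^sub>M N2) (\<lambda>\<omega>. (X \<omega>, Y \<omega>)))"
    by (simp cong: sets_pair_measure_cong)
  fix A B assume A: "A \<in> sets (distr M N1 X)" and B: "B \<in> sets (distr M N2 Y)"
  have XY: "(\<lambda>\<omega>. (X \<omega>, Y \<omega>)) \<in> measurable M (N1 \<Otimes>\<^sub>M N2)" using X Y by (rule measurable_Pair)
  have "(\<lambda>\<omega>. (X \<omega>, Y \<omega>)) -` (A \<times> B) \<inter> space M = (X -` A \<inter> space M) \<inter> (Y -` B \<inter> space M)" by auto
  moreover have "prob ((X -` A \<inter> space M) \<inter> (Y -` B \<inter> space M)) = prob (X -` A \<inter> space M) * prob (Y -` B \<inter> space M)"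
    by (rule indep_setD[OF indep]) (use A B in \<open>auto simp: preimgs_def\<close>)
  ultimately show "emeasure (distr M N1 X) A * emeasure (distr M N2 Y) B
      = emeasure (distr M (N1 \<Otimes>\<^sub>M N2) (\<lambda>\<omega>. (X \<omega>, Y \<omega>))) (A \<times> B)"
    using A B by (simp add: emeasure_distr[OF X] emeasure_distr[OF Y] emeasure_distr[OF XY]
        emeasure_eq_measure ennreal_mult)
qed

lemma indep_set_pvalue_other_pvalues:
  assumes ip: "indep_vars (\<lambda>_. borel) p I" and i: "i \<in> I"
  shows "indep_set (preimgs (space M) (p i) borel)
    (preimgs (space M) (\<lambda>\<omega>. restrict (\<lambda>j. p j \<omega>) (I - {i})) (PiM (I - {i}) (\<lambda>_. borel)))"
proof -
  have "indep_set (preimgs (space M) (\<lambda>\<omega>. restrict (\<lambda>j. p j \<omega>) {i}) (PiM {i} (\<lambda>_. borel)))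
      (preimgs (space M) (\<lambda>\<omega>. restrict (\<lambda>j. p j \<omega>) (I - {i})) (PiM (I - {i}) (\<lambda>_. borel)))"
    using indep_set_preimgs_of_indep_var[OF indep_var_restrict[OF ip, of "{i}" "I - {i}"]] i by auto
  moreover have "preimgs (space M) (p i) borel
      \<subseteq> preimgs (space M) (\<lambda>\<omega>. restrict (\<lambda>j. p j \<omega>) {i}) (PiM {i} (\<lambda>_. borel))"
    using preimgs_comp_subset[OF measurable_component_singleton[of i "{i}" "\<lambda>_. borel"],
        of "\<lambda>\<omega>. restrict (\<lambda>j. p j \<omega>) {i}" "space M"]
    by (simp add: space_PiM)
  ultimately show ?thesis by (rule indep_set_mono) simp
qed

lemma indep_set_pvalue_and_other_pvalues:
  assumes indep: "indep_set (preimgs (space M) Y N) (preimgs (space M) (\<lambda>\<omega>. restrict (\<lambda>j. p j \<omega>) I) (PiM I (\<lambda>_. borel)))"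
    and i: "i \<in> I"
  shows "indep_set (preimgs (space M) Y N) (preimgs (space M) (\<lambda>\<omega>. (p i \<omega>, restrict (\<lambda>j. p j \<omega>) (I - {i})))
    (borel \<Otimes>\<^sub>M PiM (I - {i}) (\<lambda>_. borel)))"
proof (rule indep_set_mono[OF indep order_refl])
  define P where "P \<omega> = restrict (\<lambda>j. p j \<omega>) I" for \<omega>
  have "(\<lambda>f. (f i, restrict f (I - {i}))) \<in> measurable (PiM I (\<lambda>_. borel)) (borel \<Otimes>\<^sub>M PiM (I - {i}) (\<lambda>_. borel))"
    using i by (intro measurable_Pair measurable_component_singleton measurable_restrict_subset) auto
  moreover have "P \<in> space M \<rightarrow> space (PiM I (\<lambda>_. borel))" unfolding P_def by (auto simp: space_PiM)
  ultimately have "preimgs (space M) (\<lambda>\<omega>. (P \<omega> i, restrict (P \<omega>) (I - {i})))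
      (borel \<Otimes>\<^sub>M PiM (I - {i}) (\<lambda>_. borel)) \<subseteq> preimgs (space M) P (PiM I (\<lambda>_. borel))"
    by (rule preimgs_comp_subset)
  then show "preimgs (space M) (\<lambda>\<omega>. (p i \<omega>, restrict (\<lambda>j. p j \<omega>) (I - {i})))
      (borel \<Otimes>\<^sub>M PiM (I - {i}) (\<lambda>_. borel)) \<subseteq> preimgs (space M) (\<lambda>\<omega>. restrict (\<lambda>j. p j \<omega>) I) (PiM I (\<lambda>_. borel))"
    using i unfolding P_def by (simp add: restrict_def cong: if_cong)
qed

lemma indep_set_rest_pvalue:
  assumes hyps: "pvalue_hyps M X I x p" and i: "i \<in> I"
  shows "indep_set
    (preimgs (space M) (\<lambda>\<omega>. (restrict (\<lambda>j. x j \<omega>) I, restrict (\<lambda>j. p j \<omega>) (I - {i})))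
       (PiM I (\<lambda>_. X) \<Otimes>\<^sub>M PiM (I - {i}) (\<lambda>_. borel)))
    (preimgs (space M) (p i) borel)"
proof (rule indep_set_preimgs_regroup)
  have [measurable]: "j \<in> I \<Longrightarrow> p j \<in> borel_measurable M" "j \<in> I \<Longrightarrow> x j \<in> measurable M X" for j
    using hyps unfolding pvalue_hyps_def indep_vars_def2 by auto
  show "p i \<in> borel_measurable M" using i by simp
  show "(\<lambda>\<omega>. restrict (\<lambda>j. p j \<omega>) (I - {i})) \<in> measurable M (PiM (I - {i}) (\<lambda>_. borel))"
    "(\<lambda>\<omega>. restrict (\<lambda>j. x j \<omega>) I) \<in> measurable M (PiM I (\<lambda>_. X))"
    by (auto intro!: measurable_restrict)
  show "indep_set (preimgs (space M) (p i) borel)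
      (preimgs (space M) (\<lambda>\<omega>. restrict (\<lambda>j. p j \<omega>) (I - {i})) (PiM (I - {i}) (\<lambda>_. borel)))"
    using hyps i unfolding pvalue_hyps_def by (intro indep_set_pvalue_other_pvalues) auto
  show "indep_set (preimgs (space M) (\<lambda>\<omega>. restrict (\<lambda>j. x j \<omega>) I) (PiM I (\<lambda>_. X)))
      (preimgs (space M) (\<lambda>\<omega>. (p i \<omega>, restrict (\<lambda>j. p j \<omega>) (I - {i}))) (borel \<Otimes>\<^sub>M PiM (I - {i}) (\<lambda>_. borel)))"
  proof (rule indep_set_pvalue_and_other_pvalues[OF _ i])
    show "indep_set (preimgs (space M) (\<lambda>\<omega>. restrict (\<lambda>j. x j \<omega>) I) (PiM I (\<lambda>_. X)))
        (preimgs (space M) (\<lambda>\<omega>. restrict (\<lambda>j. p j \<omega>) I) (PiM I (\<lambda>_. borel)))"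
      using hyps indep_set_commute unfolding pvalue_hyps_def by blast
  qed
qed

end

section \<open>The masked p-value\<close>

lemma gtilde_measurable[measurable]: "gtilde \<in> borel_measurable borel"
  unfolding gtilde_def frac_def by measurable

lemma gtilde_below_half: "0 \<le> t \<Longrightarrow> t < 1/2 \<Longrightarrow> gtilde t = t"
proof -
  assume "0 \<le> t" "t < 1/2"
  then have "frac (t + 1/2) = t + 1/2" by (subst frac_eq) auto
  then show ?thesis unfolding gtilde_def by simp
qed

lemma gtilde_above_half: "1/2 \<le> t \<Longrightarrow> t < 1 \<Longrightarrow> gtilde t = t - 1/2"
proof -
  assume "1/2 \<le> t" "t < 1"
  then have "floor (t + 1/2) = 1" by (subst floor_eq_iff) auto
  then show ?thesis unfolding gtilde_def frac_def by simp
qed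

text \<open>The shift \<open>t \<mapsto> t + 1/2\<close> maps the part of \<open>[0, 1/2)\<close> with \<open>gtilde t \<in> E\<close> onto the part of
  \<open>[1/2, 1)\<close> with \<open>gtilde t \<in> E\<close>, and a nondecreasing density gives the image at least as much mass.\<close>
lemma nn_integral_below_half_le_above_half:
  fixes f :: "real \<Rightarrow> ennreal"
  assumes [measurable]: "f \<in> borel_measurable borel" "E \<in> sets borel"
    and f0: "\<And>t. t \<notin> {0..1} \<Longrightarrow> f t = 0" and f_mono: "mono_on {0..1} f"
  shows "(\<integral>\<^sup>+t. f t * indicator {t. t < 1/2 \<and> gtilde t \<in> E} t \<partial>lborel)
       \<le> (\<integral>\<^sup>+t. f t * indicator {t. \<not> t < 1/2 \<and> gtilde t \<in> E} t \<partial>lborel)"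
proof -
  have "(\<integral>\<^sup>+t. f t * indicator {t. t < 1/2 \<and> gtilde t \<in> E} t \<partial>lborel)
      = (\<integral>\<^sup>+t. f t * indicator ({0..<1/2} \<inter> E) t \<partial>lborel)"
  proof (intro nn_integral_cong)
    fix t :: real
    show "f t * indicator {t. t < 1/2 \<and> gtilde t \<in> E} t = f t * indicator ({0..<1/2} \<inter> E) t"
      using f0[of t] gtilde_below_half[of t] by (cases "0 \<le> t") (auto simp: indicator_def)
  qed
  also have "\<dots> \<le> (\<integral>\<^sup>+t. f (t + 1/2) * indicator ({0..<1/2} \<inter> E) t \<partial>lborel)"
    by (intro nn_integral_mono) (auto simp: indicator_def intro!: mono_onD[OF f_mono])
  also have "\<dots> = (\<integral>\<^sup>+s. f s * indicator ({0..<1/2} \<inter> E) (s - 1/2) \<partial>lborel)"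
    using nn_integral_real_affine[of "\<lambda>s. f s * indicator ({0..<1/2} \<inter> E) (s - 1/2)" 1 "1/2"]
    by (simp add: add.commute)
  also have "\<dots> \<le> (\<integral>\<^sup>+t. f t * indicator {t. \<not> t < 1/2 \<and> gtilde t \<in> E} t \<partial>lborel)"
    by (intro nn_integral_mono) (auto simp: indicator_def gtilde_above_half)
  finally show ?thesis .
qed

locale masked_pvalue = prob_space M for M :: "'a measure" +
  fixes X :: "'x measure" and I :: "nat set" and x :: "nat \<Rightarrow> 'a \<Rightarrow> 'x" and p :: "nat \<Rightarrow> 'a \<Rightarrow> real"
    and i :: nat
  assumes hyps: "pvalue_hyps M X I x p" and i_in_I: "i \<in> I"
begin

definition rest :: "'a \<Rightarrow> (nat \<Rightarrow> 'x) \<times> (nat \<Rightarrow> real)" where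
  "rest \<omega> = (restrict (\<lambda>j. x j \<omega>) I, restrict (\<lambda>j. p j \<omega>) (I - {i}))"

definition rest_space :: "((nat \<Rightarrow> 'x) \<times> (nat \<Rightarrow> real)) measure" where
  "rest_space = PiM I (\<lambda>_. X) \<Otimes>\<^sub>M PiM (I - {i}) (\<lambda>_. borel)"

definition masked :: "'a \<Rightarrow> ((nat \<Rightarrow> 'x) \<times> (nat \<Rightarrow> real)) \<times> real" where
  "masked \<omega> = (rest \<omega>, gtilde (p i \<omega>))"

definition masked_algebra :: "'a measure" where
  "masked_algebra = vimage_algebra (space M) masked (rest_space \<Otimes>\<^sub>M borel)"

lemma covariate_measurable: "j \<in> I \<Longrightarrow> x j \<in> measurable M X"
  using hyps unfolding pvalue_hyps_def by auto

lemma pvalue_measurable: "j \<in> I \<Longrightarrow> p j \<in> borel_measurable M"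
  using hyps unfolding pvalue_hyps_def indep_vars_def2 by auto

lemma rest_measurable: "rest \<in> measurable M rest_space"
  unfolding rest_def rest_space_def
  by (intro measurable_Pair measurable_restrict covariate_measurable pvalue_measurable) auto

lemma masked_measurable: "masked \<in> measurable M (rest_space \<Otimes>\<^sub>M borel)"
  unfolding masked_def using rest_measurable pvalue_measurable[OF i_in_I]
  by (intro measurable_Pair) (auto intro: measurable_compose[OF _ gtilde_measurable])

lemma space_masked_algebra: "space masked_algebra = space M"
  unfolding masked_algebra_def by simp

lemma measurable_masked_algebra:
  assumes g: "g \<in> measurable (rest_space \<Otimes>\<^sub>M borel) N" and f: "\<And>\<omega>. \<omega> \<in> space M \<Longrightarrow> f \<omega> = g (masked \<omega>)"
  shows "f \<in> measurable masked_algebra N"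
proof -
  have "(\<lambda>\<omega>. g (masked \<omega>)) \<in> measurable masked_algebra N"
    unfolding masked_algebra_def by (rule measurable_compose[OF measurable_vimage_algebra1 g])
      (use measurable_space[OF masked_measurable] in auto)
  then show ?thesis by (rule measurable_cong[THEN iffD2, rotated]) (simp add: space_masked_algebra f)
qed

lemma covariate_measurable_masked: "j \<in> I \<Longrightarrow> x j \<in> measurable masked_algebra X"
  by (rule measurable_masked_algebra[where g="\<lambda>z. fst (fst z) j"]) (auto simp: masked_def rest_def rest_space_def)

lemma pvalue_measurable_masked: "j \<in> I \<Longrightarrow> j \<noteq> i \<Longrightarrow> p j \<in> borel_measurable masked_algebra"
  by (rule measurable_masked_algebra[where g="\<lambda>z. snd (fst z) j"]) (auto simp: masked_def rest_def rest_space_def)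

lemma gtilde_pvalue_measurable_masked:
  assumes "j \<in> I" shows "(\<lambda>\<omega>. gtilde (p j \<omega>)) \<in> borel_measurable masked_algebra"
proof (cases "j = i")
  case True
  then show ?thesis by (intro measurable_masked_algebra[where g=snd]) (auto simp: masked_def)
next
  case False
  then show ?thesis using assms
    by (intro measurable_masked_algebra[where g="\<lambda>z. gtilde (snd (fst z) j)"])
      (auto simp: masked_def rest_def rest_space_def)
qed

lemma distr_rest_pvalue:
  "distr M (rest_space \<Otimes>\<^sub>M lborel) (\<lambda>\<omega>. (rest \<omega>, p i \<omega>)) = distr M rest_space rest \<Otimes>\<^sub>M distr M lborel (p i)"
proof (rule distr_pair_eq_pair_distr[OF rest_measurable])
  show "p i \<in> measurable M lborel" using pvalue_measurable[OF i_in_I] by simp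
  show "indep_set (preimgs (space M) rest rest_space) (preimgs (space M) (p i) lborel)"
    using indep_set_rest_pvalue[OF hyps i_in_I] unfolding rest_def rest_space_def preimgs_def by simp
qed


lemma emeasure_masked_pvalue_in:
  assumes D[measurable]: "D \<in> sets (rest_space \<Otimes>\<^sub>M borel)" and L[measurable]: "L \<in> sets borel"
    and f: "distributed M lborel (p i) f"
  shows "emeasure M (masked -` D \<inter> space M \<inter> {\<omega>. p i \<omega> \<in> L})
     = (\<integral>\<^sup>+v. (\<integral>\<^sup>+t. f t * indicator {t. t \<in> L \<and> (v, gtilde t) \<in> D} t \<partial>lborel) \<partial>distr M rest_space rest)"
proof -
  have pi: "p i \<in> measurable M lborel" using pvalue_measurable[OF i_in_I] by simp
  have rest_pi: "(\<lambda>\<omega>. (rest \<omega>, p i \<omega>)) \<in> measurable M (rest_space \<Otimes>\<^sub>M lborel)"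
    using rest_measurable pi by (rule measurable_Pair)
  interpret P: prob_space "distr M lborel (p i)" by (rule prob_space_distr[OF pi])
  define DL where "DL = {z \<in> space (rest_space \<Otimes>\<^sub>M lborel). (fst z, gtilde (snd z)) \<in> D \<and> snd z \<in> L}"
  have DL: "DL \<in> sets (rest_space \<Otimes>\<^sub>M lborel)" unfolding DL_def by measurable
  have "masked -` D \<inter> space M \<inter> {\<omega>. p i \<omega> \<in> L} = (\<lambda>\<omega>. (rest \<omega>, p i \<omega>)) -` DL \<inter> space M"
    unfolding DL_def masked_def using measurable_space[OF rest_measurable] by (auto simp: space_pair_measure)
  then have "emeasure M (masked -` D \<inter> space M \<inter> {\<omega>. p i \<omega> \<in> L})
      = emeasure (distr M rest_space rest \<Otimes>\<^sub>M distr M lborel (p i)) DL"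
    using emeasure_distr[OF rest_pi DL] by (simp add: distr_rest_pvalue)
  also have "\<dots> = (\<integral>\<^sup>+v. emeasure (distr M lborel (p i)) (Pair v -` DL) \<partial>distr M rest_space rest)"
    by (rule P.emeasure_pair_measure_alt) (use DL in \<open>simp cong: sets_pair_measure_cong\<close>)
  also have "\<dots> = (\<integral>\<^sup>+v. (\<integral>\<^sup>+t. f t * indicator {t. t \<in> L \<and> (v, gtilde t) \<in> D} t \<partial>lborel) \<partial>distr M rest_space rest)"
  proof (intro nn_integral_cong)
    fix v assume "v \<in> space (distr M rest_space rest)"
    then have "Pair v -` DL = {t. t \<in> L \<and> (v, gtilde t) \<in> D}"
      unfolding DL_def by (auto simp: space_pair_measure)
    moreover have "Pair v -` DL \<in> sets lborel" using sets_Pair1[OF DL] .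
    ultimately show "emeasure (distr M lborel (p i)) (Pair v -` DL)
        = (\<integral>\<^sup>+t. f t * indicator {t. t \<in> L \<and> (v, gtilde t) \<in> D} t \<partial>lborel)"
      using f unfolding distributed_def by (simp add: emeasure_density nn_integral_set_ennreal mult.commute)
  qed
  finally show ?thesis .
qed

lemma emeasure_below_half_le:
  assumes A: "A \<in> sets masked_algebra"
  shows "emeasure M (A \<inter> {\<omega>\<in>space M. p i \<omega> < 1/2}) \<le> emeasure M (A \<inter> {\<omega>\<in>space M. \<not> p i \<omega> < 1/2})"
proof -
  obtain f where f: "distributed M lborel (p i) f" and f0: "\<And>t. t \<notin> {0..1} \<Longrightarrow> f t = 0"
    and f_mono: "mono_on {0..1} f"
    using hyps i_in_I unfolding pvalue_hyps_def by blast
  have [measurable]: "f \<in> borel_measurable borel" using f unfolding distributed_def by simp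
  obtain D where D: "D \<in> sets (rest_space \<Otimes>\<^sub>M borel)" and A_eq: "A = masked -` D \<inter> space M"
    using A sets_vimage_algebra2[of masked "space M" "rest_space \<Otimes>\<^sub>M borel"]
      measurable_space[OF masked_measurable] unfolding masked_algebra_def by auto
  have above: "A \<inter> {\<omega>\<in>space M. \<not> p i \<omega> < 1/2} = masked -` D \<inter> space M \<inter> {\<omega>. p i \<omega> \<in> {1/2..}}"
    unfolding A_eq by auto
  have below: "A \<inter> {\<omega>\<in>space M. p i \<omega> < 1/2} = masked -` D \<inter> space M \<inter> {\<omega>. p i \<omega> \<in> {..<1/2}}"
    unfolding A_eq by auto
  have shift: "(\<integral>\<^sup>+t. f t * indicator {t. t < 1/2 \<and> gtilde t \<in> Pair v -` D} t \<partial>lborel)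
      \<le> (\<integral>\<^sup>+t. f t * indicator {t. \<not> t < 1/2 \<and> gtilde t \<in> Pair v -` D} t \<partial>lborel)" for v
    by (rule nn_integral_below_half_le_above_half) (use f0 f_mono sets_Pair1[OF D] in auto)
  have "emeasure M (A \<inter> {\<omega>\<in>space M. p i \<omega> < 1/2})
      = (\<integral>\<^sup>+v. (\<integral>\<^sup>+t. f t * indicator {t. t \<in> {..<1/2} \<and> (v, gtilde t) \<in> D} t \<partial>lborel) \<partial>distr M rest_space rest)"
    unfolding below by (rule emeasure_masked_pvalue_in[OF D _ f]) simp
  also have "\<dots> \<le> (\<integral>\<^sup>+v. (\<integral>\<^sup>+t. f t * indicator {t. t \<in> {1/2..} \<and> (v, gtilde t) \<in> D} t \<partial>lborel) \<partial>distr M rest_space rest)"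
    by (rule nn_integral_mono) (use shift in \<open>simp add: not_less\<close>)
  also have "(\<integral>\<^sup>+v. (\<integral>\<^sup>+t. f t * indicator {t. t \<in> {1/2..} \<and> (v, gtilde t) \<in> D} t \<partial>lborel) \<partial>distr M rest_space rest)
      = emeasure M (A \<inter> {\<omega>\<in>space M. \<not> p i \<omega> < 1/2})"
    unfolding above by (rule emeasure_masked_pvalue_in[OF D _ f, symmetric]) simp
  finally show ?thesis .
qed

end

section \<open>The online test\<close>

lemma h_eq_1_iff: "h t = 1 \<longleftrightarrow> t < 1/2"
  and h_eq_minus_1_iff: "h t = -1 \<longleftrightarrow> \<not> t < 1/2"
  and h_neq_0: "h t \<noteq> 0"
  unfolding h_def by auto

lemma preimgs_subset_sets: "f \<in> measurable N Y \<Longrightarrow> preimgs (space N) f Y \<subseteq> sets N"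
  unfolding preimgs_def by (auto intro: measurable_sets)

lemma measurable_sigma_preimgs:
  assumes "G \<subseteq> Pow \<Omega>" "preimgs \<Omega> f Y \<subseteq> G" "f \<in> \<Omega> \<rightarrow> space Y"
  shows "f \<in> measurable (sigma \<Omega> G) Y"
proof (rule measurableI)
  fix A assume "A \<in> sets Y"
  then have "f -` A \<inter> \<Omega> \<in> G" using assms(2) unfolding preimgs_def by auto
  then show "f -` A \<inter> space (sigma \<Omega> G) \<in> sets (sigma \<Omega> G)"
    using assms(1) by (simp add: sigma_sets.Basic)
qed (use assms in auto)

lemma measurable_mono_sets:
  "space N = space N' \<Longrightarrow> sets N \<subseteq> sets N' \<Longrightarrow> f \<in> measurable N Y \<Longrightarrow> f \<in> measurable N' Y"
  by (rule measurable_from_subalg[of N' N]) (auto simp: subalgebra_def)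

context
  fixes M :: "'a measure" and X :: "'x measure" and x :: "nat \<Rightarrow> 'a \<Rightarrow> 'x" and p :: "nat \<Rightarrow> 'a \<Rightarrow> real"
begin

definition online_generators :: "nat \<Rightarrow> 'a set set" where
  "online_generators t = (\<Union>i\<in>{1..t}. preimgs (space M) (x i) X \<union> preimgs (space M) (\<lambda>\<omega>. gtilde (p i \<omega>)) borel)
      \<union> (\<Union>i\<in>{1..<t}. preimgs (space M) (p i) borel)"

lemma online_generators_Pow: "online_generators t \<subseteq> Pow (space M)"
  unfolding online_generators_def preimgs_def by auto

lemma space_F_online: "space (F_online M X x p t) = space M"
  unfolding F_online_def online_generators_def[symmetric] using online_generators_Pow by simp

lemma sets_F_online: "sets (F_online M X x p t) = sigma_sets (space M) (online_generators t)"
  unfolding F_online_def online_generators_def[symmetric] using online_generators_Pow by simp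

lemma sets_F_online_subset:
  assumes "online_generators t \<subseteq> sets N" "space N = space M"
  shows "sets (F_online M X x p t) \<subseteq> sets N"
  unfolding sets_F_online using sets.sigma_sets_subset[OF assms(1)] assms(2) by simp

lemma sets_F_online_mono: "s \<le> t \<Longrightarrow> sets (F_online M X x p s) \<subseteq> sets (F_online M X x p t)"
  unfolding sets_F_online by (intro sigma_sets_mono') (auto simp: online_generators_def)

lemma pvalue_measurable_F_online: "1 \<le> j \<Longrightarrow> j < t \<Longrightarrow> p j \<in> borel_measurable (F_online M X x p t)"
  unfolding F_online_def online_generators_def[symmetric]
  by (rule measurable_sigma_preimgs[OF online_generators_Pow]) (auto simp: online_generators_def)

end

lemma (in masked_pvalue) sets_F_online_subset_masked:
  assumes "I = {1..}" "1 \<le> i"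
  shows "sets (F_online M X x p i) \<subseteq> sets masked_algebra"
proof (rule sets_F_online_subset)
  show "online_generators M X x p i \<subseteq> sets masked_algebra"
    unfolding online_generators_def using assms space_masked_algebra
      preimgs_subset_sets[OF covariate_measurable_masked] preimgs_subset_sets[OF pvalue_measurable_masked]
      preimgs_subset_sets[OF gtilde_pvalue_measurable_masked]
    by (intro Un_least UN_least) auto
qed (rule space_masked_algebra)

lemma (in prob_space) subalgebra_F_online:
  assumes "pvalue_hyps M X {1..} x p"
  shows "subalgebra M (F_online M X x p t)"
proof -
  interpret masked_pvalue M X "{1..}" x p 1 using assms by unfold_locales auto
  have "(\<lambda>\<omega>. gtilde (p j \<omega>)) \<in> borel_measurable M" if "1 \<le> j" for j
    using measurable_compose[OF pvalue_measurable gtilde_measurable] that by auto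
  then have "online_generators M X x p t \<subseteq> sets M"
    unfolding online_generators_def
    by (intro Un_least UN_least preimgs_subset_sets) (auto intro: covariate_measurable pvalue_measurable)
  then show ?thesis
    unfolding subalgebra_def using sets_F_online_subset[OF _ refl] by (simp add: space_F_online)
qed

lemma (in masked_pvalue) emeasure_online_increment_le:
  assumes "I = {1..}" "1 \<le> i"
    and A: "A \<in> sets (F_online M X x p i)" and d: "Measurable.pred (F_online M X x p i) d"
  shows "emeasure M (A \<inter> {\<omega>\<in>space M. (if d \<omega> then h (p i \<omega>) else 0) = 1})
    \<le> emeasure M (A \<inter> {\<omega>\<in>space M. (if d \<omega> then h (p i \<omega>) else 0) = -1})"
proof -
  have "{\<omega>\<in>space M. d \<omega>} \<in> sets (F_online M X x p i)"
    using d unfolding pred_def space_F_online .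
  then have "A \<inter> {\<omega>\<in>space M. d \<omega>} \<in> sets masked_algebra"
    using A sets_F_online_subset_masked[OF assms(1,2)] by auto
  moreover have "A \<inter> {\<omega>\<in>space M. (if d \<omega> then h (p i \<omega>) else 0) = 1}
      = A \<inter> {\<omega>\<in>space M. d \<omega>} \<inter> {\<omega>\<in>space M. p i \<omega> < 1/2}"
    "A \<inter> {\<omega>\<in>space M. (if d \<omega> then h (p i \<omega>) else 0) = -1}
      = A \<inter> {\<omega>\<in>space M. d \<omega>} \<inter> {\<omega>\<in>space M. \<not> p i \<omega> < 1/2}"
    by (auto simp: h_eq_1_iff h_eq_minus_1_iff)
  ultimately show ?thesis using emeasure_below_half_le by simp
qed

lemma online_signed_increments:
  assumes "prob_space M" and hyps: "pvalue_hyps M X {1..} x p" and strat: "online_strategy M X x p d"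
  shows "signed_increments M (\<lambda>k. F_online M X x p (Suc k)) (\<lambda>t \<omega>. if d t \<omega> then h (p t \<omega>) else 0)"
proof -
  interpret prob_space M by fact
  have d: "1 \<le> t \<Longrightarrow> d t \<in> measurable (F_online M X x p t) (count_space UNIV)" for t
    using strat unfolding online_strategy_def by auto
  show ?thesis
  proof
    fix k show "subalgebra M (F_online M X x p (Suc k))" by (rule subalgebra_F_online[OF hyps])
  next
    fix j k :: nat assume "1 \<le> j" "j \<le> k"
    then have [measurable]: "p j \<in> borel_measurable (F_online M X x p (Suc k))"
      "Measurable.pred (F_online M X x p (Suc k)) (d j)"
      using pvalue_measurable_F_online[of j "Suc k"]
        measurable_mono_sets[OF _ sets_F_online_mono d[of j], of "Suc k"] by (simp_all add: space_F_online)
    show "(\<lambda>\<omega>. if d j \<omega> then h (p j \<omega>) else 0) \<in> borel_measurable (F_online M X x p (Suc k))"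
      unfolding h_def by measurable
  next
    fix j \<omega> show "(if d j \<omega> then h (p j \<omega>) else 0) \<in> {- 1, 0, 1}" unfolding h_def by auto
  next
    fix k A assume k: "1 \<le> k" and "A \<in> sets (F_online M X x p (Suc (k - 1)))"
    then have "A \<in> sets (F_online M X x p k)" by simp
    interpret masked_pvalue M X "{1..}" x p k using hyps k by unfold_locales auto
    show "emeasure M (A \<inter> {\<omega>\<in>space M. (if d k \<omega> then h (p k \<omega>) else 0) = 1})
        \<le> emeasure M (A \<inter> {\<omega>\<in>space M. (if d k \<omega> then h (p k \<omega>) else 0) = -1})"
      using emeasure_online_increment_le[OF _ k \<open>A \<in> sets (F_online M X x p k)\<close> d[OF k]] by simp
  qed
qed

lemma prob_online_reject_le:
  assumes "prob_space M" "0 < \<alpha>" "\<alpha> < 1" "(\<exists>m>0. u = u_lin m \<alpha>) \<or> u = u_curved \<alpha>"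
    and "pvalue_hyps M X {1..} x p" "online_strategy M X x p d"
  shows "measure M {\<omega>\<in>space M. online_reject u p d \<omega>} \<le> \<alpha>"
proof -
  interpret signed_increments M "\<lambda>k. F_online M X x p (Suc k)" "\<lambda>t \<omega>. if d t \<omega> then h (p t \<omega>) else 0"
    using online_signed_increments assms(1,5,6) .
  have "N t \<omega> = card (selected d t \<omega>)" for t \<omega>
    unfolding N_def selected_def using h_neq_0 by (metis (mono_tags))
  moreover have "S t \<omega> = (\<Sum>i\<in>selected d t \<omega>. h (p i \<omega>))" for t \<omega>
    unfolding S_def selected_def by (rule sum.inter_filter[symmetric]) simp
  ultimately have "{\<omega>\<in>space M. online_reject u p d \<omega>} = {\<omega>\<in>space M. \<exists>k\<ge>1. exceeds u k \<omega>}"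
    unfolding online_reject_def exceeds_def by auto
  then show ?thesis using prob_exceeds_ever_le[OF assms(2-4)] by simp
qed

section \<open>The batch test\<close>

lemma sigma_sets_Int_in_sets:
  assumes "A \<in> sigma_sets \<Omega> G" and E: "E \<in> sets N" and "space N = \<Omega>"
    and G: "\<And>a. a \<in> G \<Longrightarrow> a \<inter> E \<in> sets N"
  shows "A \<inter> E \<in> sets N"
  using assms(1)
proof (induction rule: sigma_sets.induct)
  case (Compl a)
  have "(\<Omega> - a) \<inter> E = E - a \<inter> E" using sets.sets_into_space[OF E] assms(3) by auto
  then show ?case using Compl E by auto
next
  case (Union a)
  have "(\<Union>k. a k) \<inter> E = (\<Union>k. a k \<inter> E)" by auto
  moreover have "(\<Union>k. a k \<inter> E) \<in> sets N" using Union by (intro sets.countable_UN) auto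
  ultimately show ?case by simp
qed (auto intro: G)

locale batch_setting = prob_space M for M :: "'a measure" +
  fixes X :: "'x measure" and n :: nat and x :: "nat \<Rightarrow> 'a \<Rightarrow> 'x" and p :: "nat \<Rightarrow> 'a \<Rightarrow> real"
    and istar :: "nat \<Rightarrow> 'a \<Rightarrow> nat"
  assumes hyps: "pvalue_hyps M X {1..n} x p" and strat: "batch_strategy M X n x p istar"
begin

abbreviation F :: "nat \<Rightarrow> 'a measure" where
  "F k \<equiv> F_batch M X n x p istar k"

abbreviation masked_algebra_of :: "nat \<Rightarrow> 'a measure" where
  "masked_algebra_of i \<equiv> masked_pvalue.masked_algebra M X {1..n} x p i"

definition batch_generators :: "nat \<Rightarrow> 'a set set" where
  "batch_generators k = (\<Union>i\<in>{1..n}. preimgs (space M) (x i) X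
     \<union> preimgs (space M) (\<lambda>\<omega>. gtilde (p i \<omega>)) borel
     \<union> preimgs (space M) (\<lambda>\<omega>. i \<in> revealed istar k \<omega>) (count_space UNIV)
     \<union> preimgs (space M) (\<lambda>\<omega>. if i \<in> revealed istar k \<omega> then p i \<omega> else 0) borel)"

definition unrevealed :: "nat \<Rightarrow> nat \<Rightarrow> 'a set" where
  "unrevealed i k = {\<omega>\<in>space M. i \<notin> revealed istar k \<omega>}"

lemma batch_generators_Pow: "batch_generators k \<subseteq> Pow (space M)"
  unfolding batch_generators_def preimgs_def by auto

lemma space_F: "space (F k) = space M"
  unfolding F_batch_def batch_generators_def[symmetric] using batch_generators_Pow by simp

lemma sets_F: "sets (F k) = sigma_sets (space M) (batch_generators k)"
  unfolding F_batch_def batch_generators_def[symmetric] using batch_generators_Pow by simp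

lemma measurable_F_of_generators:
  "preimgs (space M) f Y \<subseteq> batch_generators k \<Longrightarrow> f \<in> space M \<rightarrow> space Y \<Longrightarrow> f \<in> measurable (F k) Y"
  unfolding F_batch_def batch_generators_def[symmetric] by (rule measurable_sigma_preimgs[OF batch_generators_Pow])

lemma masked_pvalue_at: "i \<in> {1..n} \<Longrightarrow> masked_pvalue M X {1..n} x p i"
  using hyps by unfold_locales auto

lemma covariate_measurable: "i \<in> {1..n} \<Longrightarrow> x i \<in> measurable M X"
  using hyps unfolding pvalue_hyps_def by auto

lemma pvalue_measurable: "i \<in> {1..n} \<Longrightarrow> p i \<in> borel_measurable M"
  using hyps unfolding pvalue_hyps_def indep_vars_def2 by auto

lemma istar_measurable: "k \<in> {1..n} \<Longrightarrow> istar k \<in> measurable (F (k - 1)) (count_space UNIV)"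
  using strat unfolding batch_strategy_def by auto

lemma istar_unrevealed: "k \<in> {1..n} \<Longrightarrow> \<omega> \<in> space M \<Longrightarrow> istar k \<omega> \<in> {1..n} - revealed istar (k - 1) \<omega>"
  using strat unfolding batch_strategy_def by auto

lemma revealed_0: "revealed istar 0 \<omega> = {}"
  unfolding revealed_def by auto

lemma revealed_Suc: "revealed istar (Suc k) \<omega> = insert (istar (Suc k) \<omega>) (revealed istar k \<omega>)"
proof -
  have "{1..Suc k} = insert (Suc k) {1..k}" by auto
  then show ?thesis unfolding revealed_def by simp
qed

lemma revealed_mono: "m \<le> k \<Longrightarrow> revealed istar m \<omega> \<subseteq> revealed istar k \<omega>"
  unfolding revealed_def by auto

lemma pred_in_revealed:
  assumes "\<And>j. j \<in> {1..k} \<Longrightarrow> istar j \<in> measurable N (count_space UNIV)"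
  shows "Measurable.pred N (\<lambda>\<omega>. i \<in> revealed istar k \<omega>)"
proof -
  have "{\<omega>\<in>space N. i \<in> revealed istar k \<omega>} = (\<Union>j\<in>{1..k}. istar j -` {i} \<inter> space N)"
    unfolding revealed_def by auto
  also have "\<dots> \<in> sets N" using assms by (intro sets.finite_UN measurable_sets) auto
  finally show ?thesis unfolding pred_def .
qed

lemma revealed_pvalue_measurable_F:
  "i \<in> {1..n} \<Longrightarrow> (\<lambda>\<omega>. if i \<in> revealed istar k \<omega> then p i \<omega> else 0) \<in> borel_measurable (F k)"
  by (rule measurable_F_of_generators) (auto simp: batch_generators_def)

lemma covariate_measurable_F: "i \<in> {1..n} \<Longrightarrow> x i \<in> measurable (F k) X"
  by (rule measurable_F_of_generators)
    (auto simp: batch_generators_def intro!: measurable_space[OF covariate_measurable])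

lemma gtilde_pvalue_measurable_F: "i \<in> {1..n} \<Longrightarrow> (\<lambda>\<omega>. gtilde (p i \<omega>)) \<in> borel_measurable (F k)"
  by (rule measurable_F_of_generators) (auto simp: batch_generators_def)

lemma batch_generators_subset:
  assumes "space N = space M" and "\<And>j. j \<in> {1..k} \<Longrightarrow> istar j \<in> measurable N (count_space UNIV)"
    and "\<And>i. i \<in> {1..n} \<Longrightarrow> x i \<in> measurable N X"
    and "\<And>i. i \<in> {1..n} \<Longrightarrow> (\<lambda>\<omega>. gtilde (p i \<omega>)) \<in> borel_measurable N"
    and "\<And>i. i \<in> {1..n} \<Longrightarrow> (\<lambda>\<omega>. if i \<in> revealed istar k \<omega> then p i \<omega> else 0) \<in> borel_measurable N"
  shows "sets (F k) \<subseteq> sets N"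
proof -
  have "batch_generators k \<subseteq> sets N"
    unfolding batch_generators_def
    by (intro UN_least Un_least preimgs_subset_sets[of _ N, unfolded assms(1)] assms(3-5)
        pred_in_revealed[OF assms(2)])
  then show ?thesis unfolding sets_F using sets.sigma_sets_subset assms(1) by metis
qed

lemma istar_measurable_F_and_F_mono:
  assumes "L \<le> n"
  shows "m \<le> L \<Longrightarrow> (\<forall>j\<in>{1..m}. istar j \<in> measurable (F L) (count_space UNIV)) \<and> sets (F m) \<subseteq> sets (F L)"
proof (induction m)
  case 0
  show ?case
    by (intro conjI ballI batch_generators_subset)
      (auto simp: space_F revealed_0 covariate_measurable_F gtilde_pvalue_measurable_F)
next
  case (Suc m)
  then have IH: "\<forall>j\<in>{1..m}. istar j \<in> measurable (F L) (count_space UNIV)" "sets (F m) \<subseteq> sets (F L)"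
    by auto
  have "istar (Suc m) \<in> measurable (F m) (count_space UNIV)"
    using istar_measurable[of "Suc m"] Suc.prems assms by simp
  then have "istar (Suc m) \<in> measurable (F L) (count_space UNIV)"
    by (rule measurable_mono_sets[OF space_F[THEN trans, OF space_F[symmetric]] IH(2)])
  then have ist: "\<forall>j\<in>{1..Suc m}. istar j \<in> measurable (F L) (count_space UNIV)"
    using IH(1) by (auto simp: le_Suc_eq)
  have "(\<lambda>\<omega>. if i \<in> revealed istar (Suc m) \<omega> then p i \<omega> else 0)
      = (\<lambda>\<omega>. if i \<in> revealed istar (Suc m) \<omega> then (if i \<in> revealed istar L \<omega> then p i \<omega> else 0) else 0)" for i
    using revealed_mono[OF Suc.prems] by (auto simp: fun_eq_iff)
  moreover have "Measurable.pred (F L) (\<lambda>\<omega>. i \<in> revealed istar (Suc m) \<omega>)" for i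
    using ist by (intro pred_in_revealed) auto
  ultimately have "sets (F (Suc m)) \<subseteq> sets (F L)"
    using revealed_pvalue_measurable_F[of _ L]
    by (intro batch_generators_subset[OF space_F ist[rule_format]])
      (auto simp: covariate_measurable_F gtilde_pvalue_measurable_F)
  with ist show ?case by blast
qed

lemma sets_F_subset: "L \<le> n \<Longrightarrow> sets (F L) \<subseteq> sets M"
proof (induction L rule: less_induct)
  case (less L)
  have ist: "istar j \<in> measurable M (count_space UNIV)" if "j \<in> {1..L}" for j
    using measurable_mono_sets[OF space_F less.IH[of "j - 1"] istar_measurable[of j]] that less.prems
    by auto
  have "(\<lambda>\<omega>. if i \<in> revealed istar L \<omega> then p i \<omega> else 0) \<in> borel_measurable M" if "i \<in> {1..n}" for i
    using pred_in_revealed[OF ist] pvalue_measurable[OF that] by measurable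
  then show ?case
    by (intro batch_generators_subset ist)
      (auto intro: covariate_measurable measurable_compose[OF pvalue_measurable gtilde_measurable])
qed

lemma revealed_preimage_Int_unrevealed:
  "(\<lambda>\<omega>. j \<in> revealed istar m \<omega>) -` B \<inter> space M \<inter> unrevealed i m
    = (if True \<in> B then {\<omega>\<in>space M. j \<in> revealed istar m \<omega>} \<inter> unrevealed i m else {})
      \<union> (if False \<in> B then unrevealed i m - {\<omega>\<in>space M. j \<in> revealed istar m \<omega>} \<inter> unrevealed i m else {})"
proof (rule set_eqI)
  fix \<omega> show "\<omega> \<in> (\<lambda>\<omega>. j \<in> revealed istar m \<omega>) -` B \<inter> space M \<inter> unrevealed i m
    \<longleftrightarrow> \<omega> \<in> (if True \<in> B then {\<omega>\<in>space M. j \<in> revealed istar m \<omega>} \<inter> unrevealed i m else {})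
      \<union> (if False \<in> B then unrevealed i m - {\<omega>\<in>space M. j \<in> revealed istar m \<omega>} \<inter> unrevealed i m else {})"
    by (cases "j \<in> revealed istar m \<omega>"; cases "True \<in> B"; cases "False \<in> B") (auto simp: unrevealed_def)
qed

lemma revealed_pvalue_preimage_Int_unrevealed:
  "(\<lambda>\<omega>. if j \<in> revealed istar m \<omega> then p j \<omega> else 0) -` B \<inter> space M \<inter> unrevealed i m
    = ({\<omega>\<in>space M. j \<in> revealed istar m \<omega>} \<inter> unrevealed i m \<inter> (p j -` B \<inter> space M))
      \<union> (if 0 \<in> B then unrevealed i m - {\<omega>\<in>space M. j \<in> revealed istar m \<omega>} \<inter> unrevealed i m else {})"
proof (rule set_eqI)
  fix \<omega> show "\<omega> \<in> (\<lambda>\<omega>. if j \<in> revealed istar m \<omega> then p j \<omega> else 0) -` B \<inter> space M \<inter> unrevealed i m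
    \<longleftrightarrow> \<omega> \<in> ({\<omega>\<in>space M. j \<in> revealed istar m \<omega>} \<inter> unrevealed i m \<inter> (p j -` B \<inter> space M))
      \<union> (if 0 \<in> B then unrevealed i m - {\<omega>\<in>space M. j \<in> revealed istar m \<omega>} \<inter> unrevealed i m else {})"
    by (cases "j \<in> revealed istar m \<omega>"; cases "(0::real) \<in> B") (auto simp: unrevealed_def)
qed

lemma generator_Int_unrevealed_masked:
  assumes i: "i \<in> {1..n}" and a: "a \<in> batch_generators m"
    and E: "unrevealed i m \<in> sets (masked_algebra_of i)"
    and R: "\<And>j. {\<omega>\<in>space M. j \<in> revealed istar m \<omega>} \<inter> unrevealed i m \<in> sets (masked_algebra_of i)"
  shows "a \<inter> unrevealed i m \<in> sets (masked_algebra_of i)"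
proof -
  interpret masked_pvalue M X "{1..n}" x p i by (rule masked_pvalue_at[OF i])
  from a obtain j where j: "j \<in> {1..n}" and
    "a \<in> preimgs (space M) (x j) X \<or> a \<in> preimgs (space M) (\<lambda>\<omega>. gtilde (p j \<omega>)) borel
     \<or> a \<in> preimgs (space M) (\<lambda>\<omega>. j \<in> revealed istar m \<omega>) (count_space UNIV)
     \<or> a \<in> preimgs (space M) (\<lambda>\<omega>. if j \<in> revealed istar m \<omega> then p j \<omega> else 0) borel"
    unfolding batch_generators_def by blast
  then consider (basic) "a \<in> preimgs (space M) (x j) X \<union> preimgs (space M) (\<lambda>\<omega>. gtilde (p j \<omega>)) borel"
    | (revealed) B where "a = (\<lambda>\<omega>. j \<in> revealed istar m \<omega>) -` B \<inter> space M"
    | (pvalue) B where "a = (\<lambda>\<omega>. if j \<in> revealed istar m \<omega> then p j \<omega> else 0) -` B \<inter> space M"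
      "B \<in> sets borel"
    by (auto simp only: preimgs_def mem_Collect_eq Un_iff)
  then show ?thesis
  proof cases
    case basic
    then have "a \<in> sets masked_algebra"
      using preimgs_subset_sets[OF covariate_measurable_masked[OF j]]
        preimgs_subset_sets[OF gtilde_pvalue_measurable_masked[OF j]] unfolding space_masked_algebra by blast
    then show ?thesis using E by (rule sets.Int)
  next
    case (revealed B)
    then show ?thesis unfolding revealed revealed_preimage_Int_unrevealed using E R by auto
  next
    case (pvalue B)
    have "{\<omega>\<in>space M. j \<in> revealed istar m \<omega>} \<inter> unrevealed i m \<inter> (p j -` B \<inter> space M) \<in> sets masked_algebra"
    proof (cases "j = i")
      case True
      then show ?thesis by (simp add: unrevealed_def Int_def conj_ac)
    next
      case False
      have "p j -` B \<inter> space M \<in> sets masked_algebra"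
        using measurable_sets[OF pvalue_measurable_masked[OF j False] pvalue(2)] unfolding space_masked_algebra .
      then show ?thesis using R by auto
    qed
    then show ?thesis unfolding pvalue(1) revealed_pvalue_preimage_Int_unrevealed using E R by auto
  qed
qed

lemma unrevealed_masked:
  assumes i: "i \<in> {1..n}"
  shows "m \<le> n \<Longrightarrow> unrevealed i m \<in> sets (masked_algebra_of i)
    \<and> (\<forall>j. {\<omega>\<in>space M. j \<in> revealed istar m \<omega>} \<inter> unrevealed i m \<in> sets (masked_algebra_of i))"
proof (induction m)
  case 0
  interpret masked_pvalue M X "{1..n}" x p i by (rule masked_pvalue_at[OF i])
  have "unrevealed i 0 = space masked_algebra" unfolding unrevealed_def revealed_0 space_masked_algebra by simp
  then show ?case by (simp add: revealed_0)
next
  case (Suc m)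
  then have E: "unrevealed i m \<in> sets (masked_algebra_of i)"
    and R: "\<And>j. {\<omega>\<in>space M. j \<in> revealed istar m \<omega>} \<inter> unrevealed i m \<in> sets (masked_algebra_of i)"
    by auto
  have chosen: "{\<omega>\<in>space M. istar (Suc m) \<omega> = j} \<inter> unrevealed i m \<in> sets (masked_algebra_of i)" for j
  proof (rule sigma_sets_Int_in_sets[OF _ E])
    show "{\<omega>\<in>space M. istar (Suc m) \<omega> = j} \<in> sigma_sets (space M) (batch_generators m)"
      using measurable_sets[OF istar_measurable[of "Suc m"], of "{j}"] Suc.prems
      by (simp add: sets_F space_F vimage_def Int_def conj_commute)
    show "space (masked_algebra_of i) = space M"
      by (rule masked_pvalue.space_masked_algebra[OF masked_pvalue_at[OF i]])
  qed (rule generator_Int_unrevealed_masked[OF i _ E R])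
  have "unrevealed i (Suc m) = unrevealed i m - {\<omega>\<in>space M. istar (Suc m) \<omega> = i} \<inter> unrevealed i m"
    unfolding unrevealed_def revealed_Suc by auto
  moreover have "{\<omega>\<in>space M. j \<in> revealed istar (Suc m) \<omega>} \<inter> unrevealed i (Suc m)
      = (({\<omega>\<in>space M. j \<in> revealed istar m \<omega>} \<inter> unrevealed i m)
         \<union> ({\<omega>\<in>space M. istar (Suc m) \<omega> = j} \<inter> unrevealed i m)) \<inter> unrevealed i (Suc m)" for j
    unfolding unrevealed_def revealed_Suc by auto
  ultimately show ?case using E R chosen by auto
qed

lemma F_Int_unrevealed_masked:
  assumes "i \<in> {1..n}" "m \<le> n" "A \<in> sets (F m)"
  shows "A \<inter> unrevealed i m \<in> sets (masked_algebra_of i)"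
proof -
  have "A \<in> sigma_sets (space M) (batch_generators m)" using assms(3) sets_F by simp
  then show ?thesis
  proof (rule sigma_sets_Int_in_sets)
    show "unrevealed i m \<in> sets (masked_algebra_of i)" using unrevealed_masked[OF assms(1,2)] by blast
    show "space (masked_algebra_of i) = space M"
      by (rule masked_pvalue.space_masked_algebra[OF masked_pvalue_at[OF assms(1)]])
    fix a assume "a \<in> batch_generators m"
    then show "a \<inter> unrevealed i m \<in> sets (masked_algebra_of i)"
      using generator_Int_unrevealed_masked[OF assms(1)] unrevealed_masked[OF assms(1,2)] by blast
  qed
qed

lemma emeasure_selected_below_half_le:
  assumes k: "k \<in> {1..n}" and A: "A \<in> sets (F (k - 1))"
  shows "emeasure M (A \<inter> {\<omega>\<in>space M. h (p (istar k \<omega>) \<omega>) = 1})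
       \<le> emeasure M (A \<inter> {\<omega>\<in>space M. h (p (istar k \<omega>) \<omega>) = -1})"
proof -
  define B where "B i = A \<inter> {\<omega>\<in>space M. istar k \<omega> = i}" for i
  have k_le: "k - 1 \<le> n" using k by auto
  have "B i \<in> sets (F (k - 1))" for i
  proof -
    have "{\<omega>\<in>space M. istar k \<omega> = i} \<in> sets (F (k - 1))"
      using measurable_sets[OF istar_measurable[OF k], of "{i}"] by (simp add: space_F vimage_def Int_def conj_commute)
    then show ?thesis unfolding B_def by (rule sets.Int[OF A])
  qed
  then have B_M: "B i \<in> sets M" for i using sets_F_subset[of "k - 1"] k by (meson k_le subsetD)
  have B_masked: "B i \<in> sets (masked_algebra_of i)" if i: "i \<in> {1..n}" for i
  proof -
    have "B i = B i \<inter> unrevealed i (k - 1)"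
      using istar_unrevealed[OF k] sets.sets_into_space[OF B_M] by (auto simp: B_def unrevealed_def)
    then show ?thesis using F_Int_unrevealed_masked[OF i k_le \<open>B i \<in> sets (F (k - 1))\<close>] by simp
  qed
  have split: "A \<inter> {\<omega>\<in>space M. h (p (istar k \<omega>) \<omega>) = c}
      = (\<Union>i\<in>{1..n}. B i \<inter> {\<omega>\<in>space M. h (p i \<omega>) = c})" for c
    using istar_unrevealed[OF k] by (auto simp: B_def)
  have emeasure_split: "emeasure M (A \<inter> {\<omega>\<in>space M. h (p (istar k \<omega>) \<omega>) = c})
      = (\<Sum>i\<in>{1..n}. emeasure M (B i \<inter> {\<omega>\<in>space M. h (p i \<omega>) = c}))" for c
  proof -
    have "{\<omega>\<in>space M. h (p i \<omega>) = c} \<in> sets M" if "i \<in> {1..n}" for i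
      using pvalue_measurable[OF that] unfolding h_def by measurable
    then have "(\<lambda>i. B i \<inter> {\<omega>\<in>space M. h (p i \<omega>) = c}) ` {1..n} \<subseteq> sets M"
      using B_M by auto
    moreover have "disjoint_family_on (\<lambda>i. B i \<inter> {\<omega>\<in>space M. h (p i \<omega>) = c}) {1..n}"
      unfolding disjoint_family_on_def B_def by auto
    ultimately show ?thesis unfolding split by (rule sum_emeasure[symmetric]) simp
  qed
  have "emeasure M (B i \<inter> {\<omega>\<in>space M. h (p i \<omega>) = 1}) \<le> emeasure M (B i \<inter> {\<omega>\<in>space M. h (p i \<omega>) = -1})"
    if "i \<in> {1..n}" for i
    using masked_pvalue.emeasure_below_half_le[OF masked_pvalue_at[OF that] B_masked[OF that]]
    by (simp add: h_eq_1_iff h_eq_minus_1_iff)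
  then show ?thesis unfolding emeasure_split by (rule sum_mono)
qed

lemma istar_inj_on: "k \<le> n \<Longrightarrow> \<omega> \<in> space M \<Longrightarrow> inj_on (\<lambda>j. istar j \<omega>) {1..k}"
proof (rule inj_onI, rule ccontr)
  fix j1 j2 assume "k \<le> n" "\<omega> \<in> space M" "j1 \<in> {1..k}" "j2 \<in> {1..k}" "istar j1 \<omega> = istar j2 \<omega>" "j1 \<noteq> j2"
  moreover have "istar b \<omega> \<noteq> istar a \<omega>" if "a < b" "a \<in> {1..k}" "b \<in> {1..k}" "k \<le> n" "\<omega> \<in> space M" for a b
  proof -
    have "istar b \<omega> \<notin> revealed istar (b - 1) \<omega>" using istar_unrevealed[of b \<omega>] that by auto
    moreover have "istar a \<omega> \<in> revealed istar (b - 1) \<omega>" unfolding revealed_def using that by auto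
    ultimately show ?thesis by auto
  qed
  ultimately show False by (metis linorder_neqE_nat)
qed

lemma batch_signed_increments:
  "signed_increments M (\<lambda>k. F (min k n)) (\<lambda>j \<omega>. if j \<le> n then h (p (istar j \<omega>) \<omega>) else 0)"
proof
  fix k show "subalgebra M (F (min k n))"
    unfolding subalgebra_def using sets_F_subset[of "min k n"] by (simp add: space_F)
next
  fix j k :: nat assume j: "1 \<le> j" "j \<le> k"
  show "(\<lambda>\<omega>. if j \<le> n then h (p (istar j \<omega>) \<omega>) else 0) \<in> borel_measurable (F (min k n))"
  proof (cases "j \<le> n")
    case True
    define L where "L = min k n"
    have "j \<le> L" "L \<le> n" using j True unfolding L_def by auto
    define f where "f i \<omega> = (if i \<in> {1..n} then h (if i \<in> revealed istar L \<omega> then p i \<omega> else 0) else 0)" for i \<omega>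
    have "(\<lambda>\<omega>. f i \<omega>) \<in> borel_measurable (F L)" for i
      using revealed_pvalue_measurable_F[of i L] unfolding f_def h_def by (cases "i \<in> {1..n}") auto
    moreover have "istar j \<in> measurable (F L) (count_space UNIV)"
      using istar_measurable_F_and_F_mono[OF \<open>L \<le> n\<close> \<open>j \<le> L\<close>] j by auto
    ultimately have "(\<lambda>\<omega>. f (istar j \<omega>) \<omega>) \<in> borel_measurable (F L)"
      by (rule measurable_compose_countable)
    moreover have "f (istar j \<omega>) \<omega> = h (p (istar j \<omega>) \<omega>)" if "\<omega> \<in> space (F L)" for \<omega>
    proof -
      have "istar j \<omega> \<in> {1..n}" using istar_unrevealed[of j \<omega>] that j True by (auto simp: space_F)
      moreover have "istar j \<omega> \<in> revealed istar L \<omega>" unfolding revealed_def using j \<open>j \<le> L\<close> by auto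
      ultimately show ?thesis unfolding f_def by simp
    qed
    ultimately show ?thesis using True unfolding L_def by (simp cong: measurable_cong)
  qed simp
next
  fix j \<omega> show "(if j \<le> n then h (p (istar j \<omega>) \<omega>) else 0) \<in> {-1, 0, 1}" unfolding h_def by auto
next
  fix k A assume k: "1 \<le> k" and A: "A \<in> sets (F (min (k - 1) n))"
  show "emeasure M (A \<inter> {\<omega>\<in>space M. (if k \<le> n then h (p (istar k \<omega>) \<omega>) else 0) = 1})
      \<le> emeasure M (A \<inter> {\<omega>\<in>space M. (if k \<le> n then h (p (istar k \<omega>) \<omega>) else 0) = -1})"
    using emeasure_selected_below_half_le[of k A] k A by (cases "k \<le> n") auto
qed

lemma prob_batch_reject_le:
  assumes "0 < \<alpha>" "\<alpha> < 1" and u: "(\<exists>m>0. u = u_lin m \<alpha>) \<or> u = u_curved \<alpha>"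
  shows "prob {\<omega>\<in>space M. batch_reject u n p istar \<omega>} \<le> \<alpha>"
proof -
  interpret signed_increments M "\<lambda>k. F (min k n)" "\<lambda>j \<omega>. if j \<le> n then h (p (istar j \<omega>) \<omega>) else 0"
    by (rule batch_signed_increments)
  have "N k \<omega> = k" "S k \<omega> = (\<Sum>i\<in>revealed istar k \<omega>. h (p i \<omega>))"
    if "k \<in> {1..n}" "\<omega> \<in> space M" for k \<omega>
  proof -
    have "{j\<in>{1..k}. (if j \<le> n then h (p (istar j \<omega>) \<omega>) else 0) \<noteq> 0} = {1..k}"
      using that by (auto simp: h_neq_0)
    then show "N k \<omega> = k" unfolding N_def by simp
    have "S k \<omega> = (\<Sum>j\<in>{1..k}. h (p (istar j \<omega>) \<omega>))" unfolding S_def using that by (intro sum.cong) auto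
    also have "\<dots> = (\<Sum>i\<in>revealed istar k \<omega>. h (p i \<omega>))"
      unfolding revealed_def using istar_inj_on[of k \<omega>] that by (subst sum.reindex) auto
    finally show "S k \<omega> = (\<Sum>i\<in>revealed istar k \<omega>. h (p i \<omega>))" .
  qed
  then have "batch_reject u n p istar \<omega> \<longleftrightarrow> (\<exists>k\<in>{1..n}. exceeds u k \<omega>)" if "\<omega> \<in> space M" for \<omega>
    unfolding batch_reject_def exceeds_def using that by (intro bex_cong) auto
  then have "{\<omega>\<in>space M. batch_reject u n p istar \<omega>} = {\<omega>\<in>space M. \<exists>k\<in>{1..n}. exceeds u k \<omega>}"
    by auto
  then show ?thesis using prob_exceeds_le[OF assms(1,2) u] by simp
qed

end

theorem theorem8:
  fixes M :: "'a measure" and X :: "'x measure" and \<alpha> :: real and u :: "nat \<Rightarrow> real"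
  assumes "prob_space M"
    and "0 < \<alpha>" and "\<alpha> < 1"
    and "(\<exists>m>0. u = u_lin m \<alpha>) \<or> u = u_curved \<alpha>"
  shows "(\<forall>n x p istar. pvalue_hyps M X {1..n} x p \<and> batch_strategy M X n x p istar \<longrightarrow>
            measure M {\<omega> \<in> space M. batch_reject u n p istar \<omega>} \<le> \<alpha>)
       \<and> (\<forall>x p d. pvalue_hyps M X {1..} x p \<and> online_strategy M X x p d \<longrightarrow>
            measure M {\<omega> \<in> space M. online_reject u p d \<omega>} \<le> \<alpha>)"
proof (intro conjI allI impI)
  fix n x p istar
  assume "pvalue_hyps M X {1..n} x p \<and> batch_strategy M X n x p istar"
  then interpret batch_setting M X n x p istar
    using assms(1) by (simp add: batch_setting_def batch_setting_axioms_def)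
  show "measure M {\<omega> \<in> space M. batch_reject u n p istar \<omega>} \<le> \<alpha>"
    by (rule prob_batch_reject_le[OF assms(2-4)])
next
  fix x p d
  assume "pvalue_hyps M X {1..} x p \<and> online_strategy M X x p d"
  then show "measure M {\<omega> \<in> space M. online_reject u p d \<omega>} \<le> \<alpha>"
    using prob_online_reject_le[OF assms] by blast
qed

end
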